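(* Under the pairwise setting and assumptions described in the context, for every $\boldsymbol{\theta}$ in the interior of $\Theta$, the total gradient of $F(\boldsymbol{\theta})=\mathcal{J}(\boldsymbol{\theta},\boldsymbol{\phi}^*(\boldsymbol{\theta}))$ equals the standard (KL-regularized) policy gradient with the reward replaced by the implicit effective reward \[ \tilde{r}_{\boldsymbol{\theta},BT}(x,y)=r_{\boldsymbol{\phi}^*(\boldsymbol{\theta})}(x,y)+\mathbb{E}_{y'\sim\pi_{\rm ref}(\cdot|x)}\big[\langle\bar{\mathbf{g}}_r(\boldsymbol{\theta}),\mathcal{I}^{\boldsymbol{\theta}}_{BT}(x,y,y')\rangle\big], \] that is, $\nabla_{\boldsymbol{\theta}}F(\boldsymbol{\theta})=\mathbb{E}_{x\sim P_{\mathcal{X}},\,y\sim\pi_{\boldsymbol{\theta}}(\cdot|x)}\big[\tilde{r}_{\boldsymbol{\theta},BT}(x,y)\nabla_{\boldsymbol{\theta}}\log\pi_{\boldsymbol{\theta}}(y|x)\big]-\beta\nabla_{\boldsymbol{\theta}}\mathbb{E}_{x\sim P_{\mathcal{X}}}\big[D_{KL}(\pi_{\boldsymbol{\theta}}(\cdot|x)\,\|\,\pi_{\rm ref}(\cdot|x))\big]$.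
   Context: Let $\mathcal{X}$ (prompts) and $\mathcal{Y}$ (responses) be spaces with $\mathcal{X}\times\mathcal{Y}$ compact, and $P_{\mathcal{X}}$ a probability distribution on $\mathcal{X}$. For $\boldsymbol{\theta}\in\Theta\subseteq\mathbb{R}^{d_{\boldsymbol{\theta}}}$ ($\Theta$ compact), $\pi_{\boldsymbol{\theta}}(\cdot|x)$ is a probability density on $\mathcal{Y}$, twice continuously differentiable in $\boldsymbol{\theta}$ for every $(x,y)$, with $\pi_{\boldsymbol{\theta}}(y|x)>0$; $\pi_{\rm ref}(\cdot|x)$ is a fixed reference policy (not depending on $\boldsymbol{\theta}$) and $\beta>0$. Reward $r_{\boldsymbol{\phi}}(x,y)$, $\boldsymbol{\phi}\in\mathbb{R}^{d_{\boldsymbol{\phi}}}$, is $C^2$ in $\boldsymbol{\phi}$; $\Omega$ is a $C^2$ regularizer. Leader objective: $\mathcal{J}(\boldsymbol{\theta},\boldsymbol{\phi})=\mathbb{E}_{x\sim P_{\mathcal{X}}}\big[\mathbb{E}_{y\sim\pi_{\boldsymbol{\theta}}(\cdot|x)}[r_{\boldsymbol{\phi}}(x,y)]-\beta D_{KL}(\pi_{\boldsymbol{\theta}}(\cdot|x)\,\|\,\pi_{\rm ref}(\cdot|x))\big]$. Let $P^*(y\succ y'|x)\in[0,1]$ be ground-truth preference probabilities with $P^*(y'\succ y|x)=1-P^*(y\succ y'|x)$, and $P_{\boldsymbol{\phi}}(y\succ y'|x)=\sigma(r_{\boldsymbol{\phi}}(x,y)-r_{\boldsymbol{\phi}}(x,y'))$,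 $\sigma(t)=(1+e^{-t})^{-1}$. Per-pair Bradley–Terry loss: $\ell_{BT}(x,y,y';\boldsymbol{\phi})=-P^*(y\succ y'|x)\log P_{\boldsymbol{\phi}}(y\succ y'|x)-P^*(y'\succ y|x)\log P_{\boldsymbol{\phi}}(y'\succ y|x)$. Follower loss: $\mathcal{L}_{BT}(\boldsymbol{\theta},\boldsymbol{\phi})=\mathbb{E}_{x\sim P_{\mathcal{X}},\,y\sim\pi_{\boldsymbol{\theta}}(\cdot|x),\,y'\sim\pi_{\rm ref}(\cdot|x)}[\ell_{BT}(x,y,y';\boldsymbol{\phi})]+\Omega(\boldsymbol{\phi})$, assumed strongly convex in $\boldsymbol{\phi}$ for every $\boldsymbol{\theta}$, with unique minimizer $\boldsymbol{\phi}^*(\boldsymbol{\theta})$. Pairwise influence function: $\mathcal{I}^{\boldsymbol{\theta}}_{BT}(x,y,y')=-\big[\nabla^2_{\boldsymbol{\phi}\boldsymbol{\phi}}\mathcal{L}_{BT}(\boldsymbol{\theta},\boldsymbol{\phi}^*(\boldsymbol{\theta}))\big]^{-1}\nabla_{\boldsymbol{\phi}}\ell_{BT}(x,y,y';\boldsymbol{\phi}^*(\boldsymbol{\theta}))$. Global reward gradient direction: $\bar{\mathbf{g}}_r(\boldsymbol{\theta})=\mathbb{E}_{x\sim P_{\mathcal{X}},\,y\sim\pi_{\boldsymbol{\theta}}(\cdot|x)}[\nabla_{\boldsymbol{\phi}}r_{\boldsymbol{\phi}}(x,y)]$ at $\boldsymbol{\phi}=\boldsymbol{\phi}^*(\boldsymbol{\theta})$.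 *)

theory Defs
  imports "HOL-Probability.Probability"
begin

definition grad :: "('a::euclidean_space \<Rightarrow> real) \<Rightarrow> 'a \<Rightarrow> 'a" where
  "grad f x = (\<Sum>i\<in>Basis. frechet_derivative f (at x) i *\<^sub>R i)"

definition hess :: "('a::euclidean_space \<Rightarrow> real) \<Rightarrow> 'a \<Rightarrow> 'a \<Rightarrow> 'a" where
  "hess f x = frechet_derivative (grad f) (at x)"

definition C2_param :: "'a::euclidean_space set \<Rightarrow> ('a \<Rightarrow> 'z::topological_space \<Rightarrow> real) \<Rightarrow> bool" where
  "C2_param U f \<longleftrightarrow>
     (\<forall>z. \<forall>t\<in>U. (\<lambda>t. f t z) differentiable (at t) \<and> grad (\<lambda>t. f t z) differentiable (at t)) \<and>
     continuous_on (U \<times> UNIV) (\<lambda>(t, z). f t z) \<and>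
     continuous_on (U \<times> UNIV) (\<lambda>(t, z). grad (\<lambda>t. f t z) t) \<and>
     (\<forall>h. continuous_on (U \<times> UNIV) (\<lambda>(t, z). hess (\<lambda>t. f t z) t h))"

definition strongly_convex :: "('a::real_normed_vector \<Rightarrow> real) \<Rightarrow> bool" where
  "strongly_convex f \<longleftrightarrow> (\<exists>m>0. \<forall>u v. \<forall>s::real. 0 \<le> s \<and> s \<le> 1 \<longrightarrow>
      f (s *\<^sub>R u + (1 - s) *\<^sub>R v) \<le> s * f u + (1 - s) * f v - m / 2 * s * (1 - s) * (norm (u - v))\<^sup>2)"

definition sigmoid :: "real \<Rightarrow> real" where
  "sigmoid t = 1 / (1 + exp (- t))"

definition KL :: "'y measure \<Rightarrow> ('t \<Rightarrow> 'x \<Rightarrow> 'y \<Rightarrow> real) \<Rightarrow> ('x \<Rightarrow> 'y \<Rightarrow> real) \<Rightarrow> 't \<Rightarrow> 'x \<Rightarrow> real" where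
  "KL \<mu> pol piref \<theta> x = (\<integral>y. pol \<theta> x y * ln (pol \<theta> x y / piref x y) \<partial>\<mu>)"

definition Jobj :: "'x measure \<Rightarrow> 'y measure \<Rightarrow> ('t \<Rightarrow> 'x \<Rightarrow> 'y \<Rightarrow> real) \<Rightarrow> ('x \<Rightarrow> 'y \<Rightarrow> real)
    \<Rightarrow> real \<Rightarrow> ('p \<Rightarrow> 'x \<Rightarrow> 'y \<Rightarrow> real) \<Rightarrow> 't \<Rightarrow> 'p \<Rightarrow> real" where
  "Jobj PX \<mu> pol piref \<beta> r \<theta> \<phi> =
     (\<integral>x. (\<integral>y. pol \<theta> x y * r \<phi> x y \<partial>\<mu>) - \<beta> * KL \<mu> pol piref \<theta> x \<partial>PX)"

definition Pphi :: "('p \<Rightarrow> 'x \<Rightarrow> 'y \<Rightarrow> real) \<Rightarrow> 'p \<Rightarrow> 'x \<Rightarrow> 'y \<Rightarrow> 'y \<Rightarrow> real" where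
  "Pphi r \<phi> x y y' = sigmoid (r \<phi> x y - r \<phi> x y')"

definition lBT :: "('x \<Rightarrow> 'y \<Rightarrow> 'y \<Rightarrow> real) \<Rightarrow> ('p \<Rightarrow> 'x \<Rightarrow> 'y \<Rightarrow> real) \<Rightarrow> 'x \<Rightarrow> 'y \<Rightarrow> 'y \<Rightarrow> 'p \<Rightarrow> real" where
  "lBT Pstar r x y y' \<phi> =
     - Pstar x y y' * ln (Pphi r \<phi> x y y') - Pstar x y' y * ln (Pphi r \<phi> x y' y)"

definition LBT :: "'x measure \<Rightarrow> 'y measure \<Rightarrow> ('t \<Rightarrow> 'x \<Rightarrow> 'y \<Rightarrow> real) \<Rightarrow> ('x \<Rightarrow> 'y \<Rightarrow> real)
    \<Rightarrow> ('x \<Rightarrow> 'y \<Rightarrow> 'y \<Rightarrow> real) \<Rightarrow> ('p \<Rightarrow> 'x \<Rightarrow> 'y \<Rightarrow> real) \<Rightarrow> ('p \<Rightarrow> real) \<Rightarrow> 't \<Rightarrow> 'p \<Rightarrow> real" where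
  "LBT PX \<mu> pol piref Pstar r \<Omega> \<theta> \<phi> =
     (\<integral>x. (\<integral>y. (\<integral>y'. pol \<theta> x y * piref x y' * lBT Pstar r x y y' \<phi> \<partial>\<mu>) \<partial>\<mu>) \<partial>PX) + \<Omega> \<phi>"

definition infl :: "'x measure \<Rightarrow> 'y measure \<Rightarrow> ('t \<Rightarrow> 'x \<Rightarrow> 'y \<Rightarrow> real) \<Rightarrow> ('x \<Rightarrow> 'y \<Rightarrow> real)
    \<Rightarrow> ('x \<Rightarrow> 'y \<Rightarrow> 'y \<Rightarrow> real) \<Rightarrow> ('p::euclidean_space \<Rightarrow> 'x \<Rightarrow> 'y \<Rightarrow> real) \<Rightarrow> ('p \<Rightarrow> real)
    \<Rightarrow> ('t \<Rightarrow> 'p) \<Rightarrow> 't \<Rightarrow> 'x \<Rightarrow> 'y \<Rightarrow> 'y \<Rightarrow> 'p" where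
  "infl PX \<mu> pol piref Pstar r \<Omega> phistar \<theta> x y y' =
     - (inv (hess (LBT PX \<mu> pol piref Pstar r \<Omega> \<theta>) (phistar \<theta>)))
         (grad (lBT Pstar r x y y') (phistar \<theta>))"

definition gbar :: "'x measure \<Rightarrow> 'y measure \<Rightarrow> ('t \<Rightarrow> 'x \<Rightarrow> 'y \<Rightarrow> real)
    \<Rightarrow> ('p::euclidean_space \<Rightarrow> 'x \<Rightarrow> 'y \<Rightarrow> real) \<Rightarrow> ('t \<Rightarrow> 'p) \<Rightarrow> 't \<Rightarrow> 'p" where
  "gbar PX \<mu> pol r phistar \<theta> =
     (\<integral>x. (\<integral>y. pol \<theta> x y *\<^sub>R grad (\<lambda>\<phi>. r \<phi> x y) (phistar \<theta>) \<partial>\<mu>) \<partial>PX)"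

definition rtilde :: "'x measure \<Rightarrow> 'y measure \<Rightarrow> ('t \<Rightarrow> 'x \<Rightarrow> 'y \<Rightarrow> real) \<Rightarrow> ('x \<Rightarrow> 'y \<Rightarrow> real)
    \<Rightarrow> ('x \<Rightarrow> 'y \<Rightarrow> 'y \<Rightarrow> real) \<Rightarrow> ('p::euclidean_space \<Rightarrow> 'x \<Rightarrow> 'y \<Rightarrow> real) \<Rightarrow> ('p \<Rightarrow> real)
    \<Rightarrow> ('t \<Rightarrow> 'p) \<Rightarrow> 't \<Rightarrow> 'x \<Rightarrow> 'y \<Rightarrow> real" where
  "rtilde PX \<mu> pol piref Pstar r \<Omega> phistar \<theta> x y =
     r (phistar \<theta>) x y +
     (\<integral>y'. piref x y' * (gbar PX \<mu> pol r phistar \<theta> \<bullet> infl PX \<mu> pol piref Pstar r \<Omega> phistar \<theta> x y y') \<partial>\<mu>)"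

end

theory Submission
  imports Defs
begin

text \<open>The best response \<open>\<phi>\<^sup>*(\<theta>)\<close> is the unique critical point of the strongly convex follower
  loss \<open>L\<close>, so the inverse function theorem applied to \<open>(t, \<phi>) \<mapsto> (t, \<nabla>\<^sub>\<phi>L(t, \<phi>))\<close> shows
  that \<open>\<phi>\<^sup>*\<close> is differentiable, with \<open>H \<psi>' = -\<partial>\<^sub>\<theta>\<nabla>\<^sub>\<phi>L\<close> for the Hessian \<open>H\<close> of \<open>L\<close> in
  \<open>\<phi>\<close>. By the chain rule \<open>\<nabla>F = \<partial>\<^sub>\<theta>J + \<psi>'\<^sup>T g\<^sub>r\<close>. Both \<open>\<partial>\<^sub>\<theta>J\<close> and \<open>\<partial>\<^sub>\<theta>\<nabla>\<^sub>\<phi>L\<close> are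
  integrals against the score \<open>\<nabla>\<^sub>\<theta>\<pi>\<^sub>\<theta>\<close>, and since
  \<open>\<nabla>\<^sub>\<phi>lBT = (\<sigma>(r(y) - r(y')) - P\<^sup>*) (\<nabla>r(y) - \<nabla>r(y'))\<close>, the term
  \<open>\<psi>'\<^sup>T g\<^sub>r = -\<langle>g\<^sub>r, H\<^sup>-\<^sup>1 \<partial>\<^sub>\<theta>\<nabla>\<^sub>\<phi>L\<rangle>\<close> is the score integral of the influence
  correction in the effective reward.

  All derivatives are taken under the integral sign. This is justified by continuity of the
  integrands on the compact sample space, which makes the Taylor remainders small uniformly in
  the sample; the merely measurable \<open>P\<^sup>*\<close> enters only as a bounded factor.\<close>

lemma has_derivative_grad:
  fixes f :: "'a::euclidean_space \<Rightarrow> real"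
  assumes "f differentiable (at x)"
  shows "(f has_derivative (\<lambda>h. grad f x \<bullet> h)) (at x)"
proof -
  let ?L = "frechet_derivative f (at x)"
  have d: "(f has_derivative ?L) (at x)" using assms frechet_derivative_works by blast
  interpret linear ?L using d has_derivative_linear by blast
  have "?L h = grad f x \<bullet> h" for h
  proof -
    have "?L h = ?L (\<Sum>i\<in>Basis. (h \<bullet> i) *\<^sub>R i)" by (simp add: euclidean_representation)
    also have "\<dots> = (\<Sum>i\<in>Basis. ?L i * (h \<bullet> i))" by (simp add: sum scale mult.commute)
    also have "\<dots> = h \<bullet> grad f x" by (simp add: grad_def inner_sum_right)
    finally show ?thesis by (simp add: inner_commute)
  qed
  then show ?thesis using d by (metis (no_types, lifting) ext)
qed

lemma grad_eqI:
  fixes f :: "'a::euclidean_space \<Rightarrow> real"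
  assumes "(f has_derivative (\<lambda>h. v \<bullet> h)) (at x)"
  shows "grad f x = v"
  using frechet_derivative_at[OF assms] euclidean_representation[of v]
  by (simp add: grad_def)

lemma has_derivative_hess:
  fixes f :: "'a::euclidean_space \<Rightarrow> real"
  assumes "grad f differentiable (at x)"
  shows "(grad f has_derivative hess f x) (at x)"
  using assms frechet_derivative_works unfolding hess_def by blast

lemma adjoint_eq_sum_Basis:
  fixes f :: "'a::euclidean_space \<Rightarrow> 'b::euclidean_space"
  assumes "linear f"
  shows "adjoint f y = (\<Sum>i\<in>Basis. (f i \<bullet> y) *\<^sub>R i)"
proof (rule euclidean_eqI)
  fix b :: 'a assume "b \<in> Basis"
  then have "(\<Sum>i\<in>Basis. (f i \<bullet> y) *\<^sub>R i) \<bullet> b = f b \<bullet> y"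
    by (simp add: inner_sum_left inner_Basis if_distrib cong: if_cong)
  then show "adjoint f y \<bullet> b = (\<Sum>i\<in>Basis. (f i \<bullet> y) *\<^sub>R i) \<bullet> b"
    by (metis adjoint_works[OF assms] inner_commute)
qed

lemma continuous_on_compose3:
  assumes "continuous_on (A \<times> UNIV) (\<lambda>(a, b, c). g a b c)"
    and "continuous_on S f1" "continuous_on S f2" "continuous_on S f3" "\<And>w. w \<in> S \<Longrightarrow> f1 w \<in> A"
  shows "continuous_on S (\<lambda>w. g (f1 w) (f2 w) (f3 w))"
proof -
  have "continuous_on S (\<lambda>w. (f1 w, f2 w, f3 w))" using assms(2-4) by (intro continuous_intros)
  from continuous_on_compose2[OF assms(1) this] assms(5) show ?thesis by auto
qed

section \<open>Bounded Borel functions and integrals over finite measures\<close>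

definition bounded_borel :: "('z::topological_space \<Rightarrow> 'b::real_normed_vector) \<Rightarrow> bool" where
  "bounded_borel f \<longleftrightarrow> f \<in> borel_measurable borel \<and> (\<exists>B. \<forall>z. norm (f z) \<le> B)"

lemma bounded_borel_continuous:
  fixes f :: "'z::{metric_space, second_countable_topology} \<Rightarrow> 'b::{real_normed_vector, second_countable_topology}"
  assumes "compact (UNIV :: 'z set)" "continuous_on UNIV f"
  shows "bounded_borel f"
proof -
  have "bounded (range f)" using compact_continuous_image[OF assms(2,1)] compact_imp_bounded by blast
  then obtain B where "\<And>z. norm (f z) \<le> B" unfolding bounded_iff by auto
  then show ?thesis unfolding bounded_borel_def using borel_measurable_continuous_onI[OF assms(2)] by blast
qed

lemma bounded_borel_compose:
  assumes "bounded_borel f" "g \<in> borel_measurable borel"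
  shows "bounded_borel (\<lambda>z. f (g z))"
  using assms measurable_compose[of g borel borel f] unfolding bounded_borel_def by auto

lemma bounded_borel_slice:
  fixes f :: "'w::second_countable_topology \<times> 'z::second_countable_topology \<Rightarrow> 'b::real_normed_vector"
  assumes "bounded_borel f"
  shows "bounded_borel (\<lambda>z. f (w, z))"
  by (rule bounded_borel_compose[OF assms]) (intro borel_measurable_continuous_onI continuous_intros)

lemma bounded_borel_add:
  fixes f g :: "'z::topological_space \<Rightarrow> 'b::{real_normed_vector, second_countable_topology}"
  assumes "bounded_borel f" "bounded_borel g"
  shows "bounded_borel (\<lambda>z. f z + g z)"
proof -
  obtain B B' where "\<And>z. norm (f z) \<le> B" "\<And>z. norm (g z) \<le> B'"
    using assms unfolding bounded_borel_def by blast
  then have "norm (f z + g z) \<le> B + B'" for z by (meson add_mono norm_triangle_le)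
  then show ?thesis using assms unfolding bounded_borel_def by auto
qed

lemma bounded_borel_uminus:
  fixes f :: "'z::topological_space \<Rightarrow> 'b::{real_normed_vector, second_countable_topology}"
  shows "bounded_borel f \<Longrightarrow> bounded_borel (\<lambda>z. - f z)"
  unfolding bounded_borel_def by auto

lemma bounded_borel_diff:
  fixes f g :: "'z::topological_space \<Rightarrow> 'b::{real_normed_vector, second_countable_topology}"
  shows "bounded_borel f \<Longrightarrow> bounded_borel g \<Longrightarrow> bounded_borel (\<lambda>z. f z - g z)"
  using bounded_borel_add[of f "\<lambda>z. - g z"] bounded_borel_uminus[of g] by simp

lemma bounded_borel_scaleR:
  fixes f :: "'z::topological_space \<Rightarrow> real" and g :: "'z \<Rightarrow> 'b::{real_normed_vector, second_countable_topology}"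
  assumes "bounded_borel f" "bounded_borel g"
  shows "bounded_borel (\<lambda>z. f z *\<^sub>R g z)"
proof -
  obtain B B' where "\<And>z. \<bar>f z\<bar> \<le> B" "\<And>z. norm (g z) \<le> B'"
    using assms unfolding bounded_borel_def real_norm_def by blast
  then have "norm (f z *\<^sub>R g z) \<le> B * B'" for z
    by (simp only: norm_scaleR) (intro mult_mono, auto intro: order_trans[OF abs_ge_zero])
  then show ?thesis using assms unfolding bounded_borel_def by auto
qed

lemma bounded_borel_mult:
  fixes f g :: "'z::topological_space \<Rightarrow> real"
  shows "bounded_borel f \<Longrightarrow> bounded_borel g \<Longrightarrow> bounded_borel (\<lambda>z. f z * g z)"
  using bounded_borel_scaleR[of f g] by simp

lemma bounded_borel_bounded_linear:
  fixes T :: "'b::{real_normed_vector, second_countable_topology} \<Rightarrow> 'c::{real_normed_vector, second_countable_topology}"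
  assumes "bounded_linear T" "bounded_borel g"
  shows "bounded_borel (\<lambda>z. T (g z))"
proof -
  obtain K where K: "\<And>x. norm (T x) \<le> norm x * K" "K \<ge> 0"
    using bounded_linear.nonneg_bounded[OF assms(1)] by blast
  obtain B where "\<And>z. norm (g z) \<le> B" using assms(2) unfolding bounded_borel_def by blast
  then have "norm (T (g z)) \<le> B * K" for z using K by (meson mult_right_mono order_trans)
  moreover have "T \<in> borel_measurable borel"
    by (intro borel_measurable_continuous_onI linear_continuous_on assms(1))
  ultimately show ?thesis
    using assms(2) measurable_compose[of g borel borel T] unfolding bounded_borel_def by auto
qed

lemma integrable_bounded_borel:
  fixes g :: "'z::topological_space \<Rightarrow> 'b::{banach, second_countable_topology}"
  assumes "bounded_borel g" "finite_measure M" "sets M = sets borel"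
  shows "integrable M g"
proof -
  interpret finite_measure M by fact
  obtain B where B: "\<And>z. norm (g z) \<le> B" using assms(1) unfolding bounded_borel_def by blast
  have "g \<in> borel_measurable M"
    using assms(1) unfolding bounded_borel_def measurable_cong_sets[OF assms(3) refl] by simp
  then show ?thesis by (intro integrable_const_bound[where B=B]) (auto intro: B)
qed

lemma norm_integral_le_measure_times_bound:
  fixes f :: "'z \<Rightarrow> 'b::{banach, second_countable_topology}"
  assumes "finite_measure M" "integrable M f" "\<And>z. norm (f z) \<le> B"
  shows "norm (\<integral>z. f z \<partial>M) \<le> measure M (space M) * B"
proof -
  interpret finite_measure M by fact
  have "norm (\<integral>z. f z \<partial>M) \<le> (\<integral>z. norm (f z) \<partial>M)" by (rule integral_norm_bound)
  also have "\<dots> \<le> (\<integral>z. B \<partial>M)"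
    by (intro integral_mono assms integrable_norm) (auto intro: assms)
  also have "\<dots> = measure M (space M) * B" by simp
  finally show ?thesis .
qed

lemma borel_measurable_integral_slice:
  fixes g :: "'w::second_countable_topology \<times> 'z::second_countable_topology \<Rightarrow> 'b::{banach, second_countable_topology}"
  assumes "g \<in> borel_measurable borel" "sets M = sets borel" "finite_measure M"
  shows "(\<lambda>w. \<integral>z. g (w, z) \<partial>M) \<in> borel_measurable borel"
proof -
  interpret finite_measure M by fact
  have "sets (borel \<Otimes>\<^sub>M M) = sets (borel \<Otimes>\<^sub>M (borel :: 'z measure))"
    by (intro sets_pair_measure_cong assms refl)
  also have "\<dots> = sets (borel :: ('w \<times> 'z) measure)" by (metis borel_prod)
  finally have "g \<in> borel_measurable (borel \<Otimes>\<^sub>M M)"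
    using measurable_cong_sets[of "borel \<Otimes>\<^sub>M M" borel] assms(1) by auto
  then show ?thesis by (simp add: borel_measurable_lebesgue_integral)
qed

lemma bounded_borel_integral_slice:
  fixes f :: "'w::second_countable_topology \<times> 'z::second_countable_topology \<Rightarrow> 'b::{banach, second_countable_topology}"
  assumes "bounded_borel f" "finite_measure M" "sets M = sets borel"
  shows "bounded_borel (\<lambda>w. \<integral>z. f (w, z) \<partial>M)"
proof -
  obtain B where "\<And>z. norm (f z) \<le> B" using assms(1) unfolding bounded_borel_def by blast
  then have "norm (\<integral>z. f (w, z) \<partial>M) \<le> measure M (space M) * B" for w
    using norm_integral_le_measure_times_bound[OF assms(2)]
      integrable_bounded_borel[OF bounded_borel_slice[OF assms(1)] assms(2,3)] by blast
  moreover have "(\<lambda>w. \<integral>z. f (w, z) \<partial>M) \<in> borel_measurable borel"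
    using borel_measurable_integral_slice[of f M] assms unfolding bounded_borel_def by blast
  ultimately show ?thesis unfolding bounded_borel_def by blast
qed

section \<open>Families differentiable uniformly in a parameter\<close>

text \<open>The uniformity in \<open>z\<close> is what differentiation under the integral sign needs, and it
  survives integrating \<open>z\<close> out.\<close>

definition uniformly_differentiable_family ::
    "'a::euclidean_space set \<Rightarrow> ('a \<Rightarrow> 'z::topological_space \<Rightarrow> real) \<Rightarrow> ('a \<Rightarrow> 'z \<Rightarrow> 'a) \<Rightarrow> bool" where
  "uniformly_differentiable_family U F D \<longleftrightarrow> open U \<and>
    (\<forall>t\<in>U. bounded_borel (F t) \<and> bounded_borel (D t)) \<and>
    (\<forall>t0\<in>U. \<forall>e>0. \<exists>d>0. \<forall>t z. norm (t - t0) < d \<longrightarrow> t \<in> U \<and>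
        \<bar>F t z - F t0 z - D t0 z \<bullet> (t - t0)\<bar> \<le> e * norm (t - t0) \<and> norm (D t z - D t0 z) \<le> e)"

lemma uniformly_differentiable_familyD:
  assumes "uniformly_differentiable_family U F D"
  shows "open U" "t \<in> U \<Longrightarrow> bounded_borel (F t)" "t \<in> U \<Longrightarrow> bounded_borel (D t)"
    "t0 \<in> U \<Longrightarrow> e > 0 \<Longrightarrow> \<exists>d>0. \<forall>t z. norm (t - t0) < d \<longrightarrow> t \<in> U \<and>
        \<bar>F t z - F t0 z - D t0 z \<bullet> (t - t0)\<bar> \<le> e * norm (t - t0) \<and> norm (D t z - D t0 z) \<le> e"
  using assms unfolding uniformly_differentiable_family_def by blast+

text \<open>Continuity of the gradient on the compact sets \<open>cball t0 r \<times> UNIV\<close> makes it uniformly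
  continuous; the mean value inequality then bounds the Taylor remainder.\<close>

lemma uniformly_differentiable_family_continuous:
  fixes F :: "'a::euclidean_space \<Rightarrow> 'z::{metric_space, second_countable_topology} \<Rightarrow> real"
  assumes U: "open U" and cpt: "compact (UNIV :: 'z set)"
    and cF: "continuous_on (U \<times> UNIV) (\<lambda>w. F (fst w) (snd w))"
    and cD: "continuous_on (U \<times> UNIV) (\<lambda>w. D (fst w) (snd w))"
    and dF: "\<And>t z. t \<in> U \<Longrightarrow> ((\<lambda>t. F t z) has_derivative (\<lambda>h. D t z \<bullet> h)) (at t)"
  shows "uniformly_differentiable_family U F D"
  unfolding uniformly_differentiable_family_def
proof (intro conjI ballI allI impI)
  show "open U" by fact
  fix t assume t: "t \<in> U"
  have sub: "range (Pair t) \<subseteq> U \<times> UNIV" using t by auto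
  have Pair: "continuous_on UNIV (Pair t)" by (intro continuous_intros)
  have "continuous_on UNIV (F t)" "continuous_on UNIV (D t)"
    using continuous_on_compose2[OF cF Pair sub] continuous_on_compose2[OF cD Pair sub] by simp_all
  then show "bounded_borel (F t)" "bounded_borel (D t)"
    using cpt by (auto intro: bounded_borel_continuous)
next
  fix t0 :: 'a and e :: real assume t0: "t0 \<in> U" and e: "e > 0"
  obtain r where r: "r > 0" "cball t0 r \<subseteq> U" using U t0 open_contains_cball by blast
  have "uniformly_continuous_on (cball t0 r \<times> UNIV) (\<lambda>w. D (fst w) (snd w))"
    by (intro compact_uniformly_continuous compact_Times compact_cball cpt continuous_on_subset[OF cD])
      (use r in auto)
  then obtain d where d: "d > 0" and dd: "\<And>w w'. w \<in> cball t0 r \<times> UNIV \<Longrightarrow> w' \<in> cball t0 r \<times> UNIV \<Longrightarrow>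
      dist w' w < d \<Longrightarrow> dist (D (fst w') (snd w')) (D (fst w) (snd w)) < e"
    using e unfolding uniformly_continuous_on_def by metis
  define \<delta> where "\<delta> = min d r"
  have close: "norm (D s z - D t0 z) < e" if "norm (s - t0) < \<delta>" for s z
    using dd[of "(t0, z)" "(s, z)"] that r
    by (auto simp: \<delta>_def dist_Pair_Pair dist_norm norm_minus_commute)
  show "\<exists>d>0. \<forall>t z. norm (t - t0) < d \<longrightarrow> t \<in> U \<and>
        \<bar>F t z - F t0 z - D t0 z \<bullet> (t - t0)\<bar> \<le> e * norm (t - t0) \<and> norm (D t z - D t0 z) \<le> e"
  proof (intro exI[of _ \<delta>] conjI allI impI)
    show "\<delta> > 0" using d r by (simp add: \<delta>_def)
    fix t z assume tt: "norm (t - t0) < \<delta>"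
    have inU: "s \<in> U" if "s \<in> ball t0 \<delta>" for s
      using that r by (auto simp: \<delta>_def dist_norm norm_minus_commute)
    then show "t \<in> U" using tt by (simp add: dist_norm norm_minus_commute)
    show "norm (D t z - D t0 z) \<le> e" using close[OF tt, of z] by simp
    have "norm ((\<lambda>s. F s z - D t0 z \<bullet> s) t - (\<lambda>s. F s z - D t0 z \<bullet> s) t0) \<le> e * norm (t - t0)"
    proof (rule differentiable_bound[where S="ball t0 \<delta>" and f'="\<lambda>s h. (D s z - D t0 z) \<bullet> h"])
      fix s assume s: "s \<in> ball t0 \<delta>"
      have "((\<lambda>s. F s z - D t0 z \<bullet> s) has_derivative (\<lambda>h. D s z \<bullet> h - D t0 z \<bullet> h)) (at s)"
        by (intro derivative_intros dF inU s)
      then show "((\<lambda>s. F s z - D t0 z \<bullet> s) has_derivative (\<lambda>h. (D s z - D t0 z) \<bullet> h)) (at s within ball t0 \<delta>)"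
        by (auto intro: has_derivative_at_withinI simp: inner_diff_left)
      have "onorm (\<lambda>h. (D s z - D t0 z) \<bullet> h) \<le> norm (D s z - D t0 z)"
        by (rule onorm_bound) (auto simp: Cauchy_Schwarz_ineq2)
      also have "\<dots> \<le> e" using close[of s z] s by (simp add: dist_norm norm_minus_commute)
      finally show "onorm (\<lambda>h. (D s z - D t0 z) \<bullet> h) \<le> e" .
    qed (use tt d r in \<open>auto simp: \<delta>_def dist_norm norm_minus_commute\<close>)
    then show "\<bar>F t z - F t0 z - D t0 z \<bullet> (t - t0)\<bar> \<le> e * norm (t - t0)"
      by (simp add: algebra_simps)
  qed
qed

lemma uniformly_differentiable_family_has_derivative:
  assumes "uniformly_differentiable_family U F D" "t \<in> U"
  shows "((\<lambda>t. F t z) has_derivative (\<lambda>h. D t z \<bullet> h)) (at t)"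
  unfolding has_derivative_at_alt
proof (intro conjI allI impI bounded_linear_inner_right)
  fix e :: real assume "e > 0"
  then show "\<exists>d>0. \<forall>s. norm (s - t) < d \<longrightarrow> norm (F s z - F t z - D t z \<bullet> (s - t)) \<le> e * norm (s - t)"
    using uniformly_differentiable_familyD(4)[OF assms] by fastforce
qed

lemma uniformly_differentiable_family_continuous_on_deriv:
  assumes "uniformly_differentiable_family U F D"
  shows "continuous_on U (\<lambda>t. D t z)"
  unfolding continuous_on_iff
proof (intro ballI allI impI)
  fix t e assume "t \<in> U" "(e::real) > 0"
  then obtain d where "d > 0" "\<And>s. norm (s - t) < d \<Longrightarrow> norm (D s z - D t z) \<le> e / 2"
    using uniformly_differentiable_familyD(4)[OF assms, of t "e / 2"] by (meson half_gt_zero)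
  then show "\<exists>d>0. \<forall>s\<in>U. dist s t < d \<longrightarrow> dist (D s z) (D t z) < e"
    using \<open>e > 0\<close> by (intro exI[of _ d]) (force simp: dist_norm)
qed

lemma uniformly_differentiable_family_add:
  assumes F: "uniformly_differentiable_family U F D" and G: "uniformly_differentiable_family U G E"
  shows "uniformly_differentiable_family U (\<lambda>t z. F t z + G t z) (\<lambda>t z. D t z + E t z)"
  unfolding uniformly_differentiable_family_def
proof (intro conjI ballI allI impI)
  show "open U" using uniformly_differentiable_familyD(1)[OF F] .
  fix t assume "t \<in> U"
  then show "bounded_borel (\<lambda>z. F t z + G t z)" "bounded_borel (\<lambda>z. D t z + E t z)"
    using uniformly_differentiable_familyD(2,3)[OF F] uniformly_differentiable_familyD(2,3)[OF G]
    by (auto intro: bounded_borel_add)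
next
  fix t0 :: 'a and e :: real assume t0: "t0 \<in> U" and e: "e > 0"
  obtain d where d: "d > 0" "\<And>t z. norm (t - t0) < d \<Longrightarrow> t \<in> U \<and>
        \<bar>F t z - F t0 z - D t0 z \<bullet> (t - t0)\<bar> \<le> e/2 * norm (t - t0) \<and> norm (D t z - D t0 z) \<le> e/2"
    using uniformly_differentiable_familyD(4)[OF F t0, of "e/2"] e by auto
  obtain d' where d': "d' > 0" "\<And>t z. norm (t - t0) < d' \<Longrightarrow>
        \<bar>G t z - G t0 z - E t0 z \<bullet> (t - t0)\<bar> \<le> e/2 * norm (t - t0) \<and> norm (E t z - E t0 z) \<le> e/2"
    using uniformly_differentiable_familyD(4)[OF G t0, of "e/2"] e by auto
  show "\<exists>d>0. \<forall>t z. norm (t - t0) < d \<longrightarrow> t \<in> U \<and>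
        \<bar>F t z + G t z - (F t0 z + G t0 z) - (D t0 z + E t0 z) \<bullet> (t - t0)\<bar> \<le> e * norm (t - t0) \<and>
        norm (D t z + E t z - (D t0 z + E t0 z)) \<le> e"
  proof (intro exI[of _ "min d d'"] conjI allI impI)
    fix t z assume "norm (t - t0) < min d d'"
    then have A: "t \<in> U" "\<bar>F t z - F t0 z - D t0 z \<bullet> (t - t0)\<bar> \<le> e/2 * norm (t - t0)"
        "norm (D t z - D t0 z) \<le> e/2"
      and B: "\<bar>G t z - G t0 z - E t0 z \<bullet> (t - t0)\<bar> \<le> e/2 * norm (t - t0)" "norm (E t z - E t0 z) \<le> e/2"
      using d(2) d'(2) by auto
    show "t \<in> U" by fact
    show "\<bar>F t z + G t z - (F t0 z + G t0 z) - (D t0 z + E t0 z) \<bullet> (t - t0)\<bar> \<le> e * norm (t - t0)"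
    proof -
      have "F t z + G t z - (F t0 z + G t0 z) - (D t0 z + E t0 z) \<bullet> (t - t0)
          = (F t z - F t0 z - D t0 z \<bullet> (t - t0)) + (G t z - G t0 z - E t0 z \<bullet> (t - t0))"
        by (simp add: inner_add_left)
      then show ?thesis
        using A(2) B(1) abs_triangle_ineq[of "F t z - F t0 z - D t0 z \<bullet> (t - t0)"] by linarith
    qed
    have "norm (D t z + E t z - (D t0 z + E t0 z)) \<le> norm (D t z - D t0 z) + norm (E t z - E t0 z)"
      by (metis add_diff_add norm_triangle_ineq)
    then show "norm (D t z + E t z - (D t0 z + E t0 z)) \<le> e" using A(3) B(2) by linarith
  qed (use d d' in simp)
qed

lemma uniformly_differentiable_family_weight:
  assumes F: "uniformly_differentiable_family U F D" and b: "bounded_borel b"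
  shows "uniformly_differentiable_family U (\<lambda>t z. b z * F t z) (\<lambda>t z. b z *\<^sub>R D t z)"
  unfolding uniformly_differentiable_family_def
proof (intro conjI ballI allI impI)
  show "open U" using uniformly_differentiable_familyD(1)[OF F] .
  fix t assume "t \<in> U"
  then show "bounded_borel (\<lambda>z. b z * F t z)" "bounded_borel (\<lambda>z. b z *\<^sub>R D t z)"
    using uniformly_differentiable_familyD(2,3)[OF F] b by (auto intro: bounded_borel_scaleR bounded_borel_mult)
next
  fix t0 :: 'a and e :: real assume t0: "t0 \<in> U" and e: "e > 0"
  obtain Bb where Bb: "\<And>z. \<bar>b z\<bar> \<le> Bb" using b unfolding bounded_borel_def real_norm_def by blast
  then have "Bb \<ge> 0" by (meson abs_ge_zero order_trans)
  define e' where "e' = e / (Bb + 1)"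
  have e': "e' > 0" "Bb * e' \<le> e" using e \<open>Bb \<ge> 0\<close> by (simp_all add: e'_def field_simps)
  obtain d where d: "d > 0" "\<And>t z. norm (t - t0) < d \<Longrightarrow> t \<in> U \<and>
        \<bar>F t z - F t0 z - D t0 z \<bullet> (t - t0)\<bar> \<le> e' * norm (t - t0) \<and> norm (D t z - D t0 z) \<le> e'"
    using uniformly_differentiable_familyD(4)[OF F t0 e'(1)] by auto
  show "\<exists>d>0. \<forall>t z. norm (t - t0) < d \<longrightarrow> t \<in> U \<and>
        \<bar>b z * F t z - b z * F t0 z - (b z *\<^sub>R D t0 z) \<bullet> (t - t0)\<bar> \<le> e * norm (t - t0) \<and>
        norm (b z *\<^sub>R D t z - b z *\<^sub>R D t0 z) \<le> e"
  proof (intro exI[of _ d] conjI allI impI)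
    fix t z assume "norm (t - t0) < d"
    then have A: "t \<in> U" "\<bar>F t z - F t0 z - D t0 z \<bullet> (t - t0)\<bar> \<le> e' * norm (t - t0)"
        "norm (D t z - D t0 z) \<le> e'"
      using d(2) by auto
    show "t \<in> U" by fact
    have "\<bar>b z * F t z - b z * F t0 z - (b z *\<^sub>R D t0 z) \<bullet> (t - t0)\<bar>
        = \<bar>b z\<bar> * \<bar>F t z - F t0 z - D t0 z \<bullet> (t - t0)\<bar>"
      by (simp add: abs_mult[symmetric] algebra_simps)
    also have "\<dots> \<le> Bb * (e' * norm (t - t0))" using A(2) Bb[of z] by (intro mult_mono) auto
    also have "\<dots> \<le> e * norm (t - t0)" using e'(2) by (simp add: mult.assoc[symmetric] mult_right_mono)
    finally show "\<bar>b z * F t z - b z * F t0 z - (b z *\<^sub>R D t0 z) \<bullet> (t - t0)\<bar> \<le> e * norm (t - t0)" .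
    have "norm (b z *\<^sub>R D t z - b z *\<^sub>R D t0 z) = \<bar>b z\<bar> * norm (D t z - D t0 z)"
      by (simp add: scaleR_diff_right[symmetric])
    also have "\<dots> \<le> Bb * e'" using A(3) Bb[of z] by (intro mult_mono) auto
    finally show "norm (b z *\<^sub>R D t z - b z *\<^sub>R D t0 z) \<le> e" using e'(2) by linarith
  qed (use d in simp)
qed

lemma uniformly_differentiable_family_integral:
  fixes F :: "'a::euclidean_space \<Rightarrow> 'w::second_countable_topology \<times> 'z::second_countable_topology \<Rightarrow> real"
  assumes F: "uniformly_differentiable_family U F D" and M: "finite_measure M" "sets M = sets borel"
  shows "uniformly_differentiable_family U (\<lambda>t w. \<integral>z. F t (w, z) \<partial>M) (\<lambda>t w. \<integral>z. D t (w, z) \<partial>M)"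
proof -
  interpret finite_measure M by fact
  define m where "m = measure M (space M)"
  have intF: "integrable M (\<lambda>z. F t (w, z))" and intD: "integrable M (\<lambda>z. D t (w, z))" if "t \<in> U" for t w
    using that uniformly_differentiable_familyD(2,3)[OF F]
    by (auto intro: integrable_bounded_borel[OF bounded_borel_slice M])
  show ?thesis
  unfolding uniformly_differentiable_family_def
proof (intro conjI ballI allI impI)
  show "open U" using uniformly_differentiable_familyD(1)[OF F] .
  fix t assume "t \<in> U"
  then show "bounded_borel (\<lambda>w. \<integral>z. F t (w, z) \<partial>M)" "bounded_borel (\<lambda>w. \<integral>z. D t (w, z) \<partial>M)"
    using uniformly_differentiable_familyD(2,3)[OF F] by (auto intro: bounded_borel_integral_slice[OF _ M])
next
  fix t0 :: 'a and e :: real assume t0: "t0 \<in> U" and e: "e > 0"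
  define e' where "e' = e / (m + 1)"
  have "m \<ge> 0" by (simp add: m_def)
  then have e': "e' > 0" "m * e' \<le> e" using e by (simp_all add: e'_def field_simps)
  obtain d where d: "d > 0" "\<And>t z. norm (t - t0) < d \<Longrightarrow> t \<in> U \<and>
        \<bar>F t z - F t0 z - D t0 z \<bullet> (t - t0)\<bar> \<le> e' * norm (t - t0) \<and> norm (D t z - D t0 z) \<le> e'"
    using uniformly_differentiable_familyD(4)[OF F t0 e'(1)] by auto
  show "\<exists>d>0. \<forall>t w. norm (t - t0) < d \<longrightarrow> t \<in> U \<and>
        \<bar>(\<integral>z. F t (w, z) \<partial>M) - (\<integral>z. F t0 (w, z) \<partial>M) - (\<integral>z. D t0 (w, z) \<partial>M) \<bullet> (t - t0)\<bar> \<le> e * norm (t - t0) \<and>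
        norm ((\<integral>z. D t (w, z) \<partial>M) - (\<integral>z. D t0 (w, z) \<partial>M)) \<le> e"
  proof (intro exI[of _ d] conjI allI impI)
    fix t w assume tt: "norm (t - t0) < d"
    then have t: "t \<in> U" using d(2) by blast
    then show "t \<in> U" .
    have "(\<integral>z. F t (w, z) \<partial>M) - (\<integral>z. F t0 (w, z) \<partial>M) - (\<integral>z. D t0 (w, z) \<partial>M) \<bullet> (t - t0)
        = (\<integral>z. F t (w, z) - F t0 (w, z) - D t0 (w, z) \<bullet> (t - t0) \<partial>M)"
      using intF[OF t] intF[OF t0] intD[OF t0] by simp
    also have "\<bar>\<dots>\<bar> \<le> m * (e' * norm (t - t0))"
      unfolding m_def using d(2)[OF tt] intF[OF t] intF[OF t0] intD[OF t0]
        norm_integral_le_measure_times_bound[OF M(1),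
          of "\<lambda>z. F t (w, z) - F t0 (w, z) - D t0 (w, z) \<bullet> (t - t0)" "e' * norm (t - t0)"]
      by auto
    also have "\<dots> \<le> e * norm (t - t0)" using e'(2) by (simp add: mult.assoc[symmetric] mult_right_mono)
    finally show "\<bar>(\<integral>z. F t (w, z) \<partial>M) - (\<integral>z. F t0 (w, z) \<partial>M) - (\<integral>z. D t0 (w, z) \<partial>M) \<bullet> (t - t0)\<bar>
        \<le> e * norm (t - t0)" .
    have "norm ((\<integral>z. D t (w, z) \<partial>M) - (\<integral>z. D t0 (w, z) \<partial>M)) = norm (\<integral>z. D t (w, z) - D t0 (w, z) \<partial>M)"
      using intD[OF t] intD[OF t0] by simp
    also have "\<dots> \<le> m * e'"
      unfolding m_def using d(2)[OF tt] by (intro norm_integral_le_measure_times_bound[OF M(1)]) (auto intro!: intD t t0)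
    finally show "norm ((\<integral>z. D t (w, z) \<partial>M) - (\<integral>z. D t0 (w, z) \<partial>M)) \<le> e" using e'(2) by linarith
  qed (use d in simp)
qed
qed

lemma uniformly_differentiable_family_snd:
  fixes F :: "'a::euclidean_space \<Rightarrow> 'z::second_countable_topology \<Rightarrow> real"
  assumes "uniformly_differentiable_family U F D"
  shows "uniformly_differentiable_family U (\<lambda>t (w::'w::second_countable_topology \<times> 'z). F t (snd w)) (\<lambda>t w. D t (snd w))"
proof -
  have "snd \<in> borel_measurable (borel :: ('w \<times> 'z) measure)"
    by (intro borel_measurable_continuous_onI continuous_intros)
  then show ?thesis
    using assms unfolding uniformly_differentiable_family_def
    by (auto intro: bounded_borel_compose[where g=snd])
qed

section \<open>Strong convexity\<close>

lemma DERIV_le_of_quotient_le: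
  fixes q :: "real \<Rightarrow> real"
  assumes q: "(q has_real_derivative D) (at 0)"
    and le: "\<And>s. 0 < s \<Longrightarrow> s < 1 \<Longrightarrow> (q s - q 0) / s \<le> c s"
    and c: "(c \<longlongrightarrow> c0) (at_right 0)"
  shows "D \<le> c0"
proof -
  have "((\<lambda>s. (q s - q 0) / (s - 0)) \<longlongrightarrow> D) (at 0)"
    using q has_field_derivative_iff by blast
  then have "((\<lambda>s. (q s - q 0) / s) \<longlongrightarrow> D) (at_right 0)"
    by (auto intro: tendsto_mono[OF at_le])
  moreover have "\<forall>\<^sub>F s in at_right 0. (q s - q 0) / s \<le> c s"
    by (rule eventually_at_rightI[of 0 1]) (auto intro: le)
  ultimately show ?thesis
    using tendsto_le[OF trivial_limit_at_right_real c] by blast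
qed

lemma DERIV_ge_of_quotient_ge:
  fixes q :: "real \<Rightarrow> real"
  assumes "(q has_real_derivative D) (at 0)" "\<And>s. 0 < s \<Longrightarrow> s < 1 \<Longrightarrow> c0 \<le> (q s - q 0) / s"
  shows "c0 \<le> D"
proof -
  have "- D \<le> - c0"
  proof (rule DERIV_le_of_quotient_le[where c="\<lambda>_. - c0"])
    show "((\<lambda>s. - q s) has_real_derivative - D) (at 0)" using assms(1) by (rule DERIV_minus)
    fix s :: real assume "0 < s" "s < 1"
    then show "(- q s - - q 0) / s \<le> - c0" using assms(2)[of s] by (simp add: diff_divide_distrib)
  qed simp
  then show ?thesis by simp
qed

lemma has_vector_derivative_along_line:
  fixes f :: "'a::real_normed_vector \<Rightarrow> 'b::real_normed_vector"
  assumes "(f has_derivative f') (at w)"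
  shows "((\<lambda>s. f (w + s *\<^sub>R v)) has_vector_derivative f' v) (at 0)"
proof -
  have "((\<lambda>s::real. w + s *\<^sub>R v) has_derivative (\<lambda>s. s *\<^sub>R v)) (at 0)"
    by (auto intro!: derivative_eq_intros)
  from has_derivative_compose[OF this] assms
  have "((\<lambda>s. f (w + s *\<^sub>R v)) has_derivative (\<lambda>s. f' (s *\<^sub>R v))) (at 0)" by simp
  then show ?thesis
    unfolding has_vector_derivative_def
    using linear_scale[OF has_derivative_linear[OF assms]] by simp
qed

lemma strongly_convex_first_order:
  fixes f :: "'a::real_inner \<Rightarrow> real"
  assumes sc: "strongly_convex f" and df: "\<And>w. (f has_derivative (\<lambda>h. gf w \<bullet> h)) (at w)"
  obtains m where "m > 0" "\<And>u w. f w + gf w \<bullet> (u - w) + m / 2 * (norm (u - w))\<^sup>2 \<le> f u"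
proof -
  obtain m where m: "m > 0" and ineq: "\<And>u v s. 0 \<le> s \<Longrightarrow> s \<le> 1 \<Longrightarrow>
      f (s *\<^sub>R u + (1 - s) *\<^sub>R v) \<le> s * f u + (1 - s) * f v - m / 2 * s * (1 - s) * (norm (u - v))\<^sup>2"
    using sc unfolding strongly_convex_def by blast
  have "f w + gf w \<bullet> (u - w) + m / 2 * (norm (u - w))\<^sup>2 \<le> f u" for u w
  proof -
    define v where "v = u - w"
    let ?c = "\<lambda>s. f u - f w - m / 2 * (1 - s) * (norm v)\<^sup>2"
    have "gf w \<bullet> v \<le> ?c 0"
    proof (rule DERIV_le_of_quotient_le)
      show "((\<lambda>s. f (w + s *\<^sub>R v)) has_real_derivative gf w \<bullet> v) (at 0)"
        using has_vector_derivative_along_line[OF df] by (simp add: has_real_derivative_iff_has_vector_derivative)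
      fix s :: real assume s: "0 < s" "s < 1"
      have "s *\<^sub>R u + (1 - s) *\<^sub>R w = w + s *\<^sub>R v" by (simp add: v_def algebra_simps)
      then have "f (w + s *\<^sub>R v) - f (w + 0 *\<^sub>R v) \<le> s * ?c s"
        using ineq[of s u w] s by (simp add: v_def algebra_simps)
      then show "(f (w + s *\<^sub>R v) - f (w + 0 *\<^sub>R v)) / s \<le> ?c s"
        using s by (simp add: field_simps)
    next
      show "(?c \<longlongrightarrow> ?c 0) (at_right 0)"
        by (intro tendsto_intros) (auto intro: tendsto_eq_intros)
    qed
    then show ?thesis by (simp add: v_def)
  qed
  with m that show ?thesis by blast
qed

lemma strongly_convex_derivative_gradient_inj:
  fixes f :: "'a::real_inner \<Rightarrow> real"
  assumes sc: "strongly_convex f" and df: "\<And>w. (f has_derivative (\<lambda>h. gf w \<bullet> h)) (at w)"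
    and dg: "(gf has_derivative H) (at w0)"
  shows "inj H"
proof -
  obtain m where m: "m > 0" and fo: "\<And>u w. f w + gf w \<bullet> (u - w) + m / 2 * (norm (u - w))\<^sup>2 \<le> f u"
    using strongly_convex_first_order[OF sc df] by blast
  have monotone: "m * (norm (u - w))\<^sup>2 \<le> (gf u - gf w) \<bullet> (u - w)" for u w
    using fo[of u w] fo[of w u] by (simp add: inner_diff_left inner_diff_right norm_minus_commute inner_commute)
  have lin: "linear H" using dg has_derivative_linear by blast
  have pos: "m * (norm k)\<^sup>2 \<le> H k \<bullet> k" for k
  proof (rule DERIV_ge_of_quotient_ge)
    show "((\<lambda>s. gf (w0 + s *\<^sub>R k) \<bullet> k) has_real_derivative (H k \<bullet> k)) (at 0)"
    proof -
      have "((\<lambda>s. gf (w0 + s *\<^sub>R k)) has_derivative (\<lambda>s. s *\<^sub>R H k)) (at 0)"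
        using has_vector_derivative_along_line[OF dg, of k] by (simp add: has_vector_derivative_def)
      then have "((\<lambda>s. gf (w0 + s *\<^sub>R k) \<bullet> k) has_derivative (\<lambda>s. (s *\<^sub>R H k) \<bullet> k)) (at 0)"
        by (rule has_derivative_inner_left)
      then show ?thesis
        unfolding has_field_derivative_def by (rule has_derivative_eq_rhs) (auto simp: mult.commute)
    qed
    fix s :: real assume s: "0 < s" "s < 1"
    have "s * (s * (m * (norm k)\<^sup>2)) \<le> s * (gf (w0 + s *\<^sub>R k) \<bullet> k - gf w0 \<bullet> k)"
      using monotone[of "w0 + s *\<^sub>R k" w0] s by (simp add: power2_eq_square algebra_simps)
    then have "s * (m * (norm k)\<^sup>2) \<le> gf (w0 + s *\<^sub>R k) \<bullet> k - gf w0 \<bullet> k"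
      using s by simp
    then show "m * (norm k)\<^sup>2 \<le> (gf (w0 + s *\<^sub>R k) \<bullet> k - gf (w0 + 0 *\<^sub>R k) \<bullet> k) / s"
      using s by (simp add: field_simps)
  qed
  show "inj H"
    unfolding linear_injective_0[OF lin]
  proof (intro allI impI)
    fix k assume "H k = 0"
    then have "m * (norm k)\<^sup>2 \<le> 0" using pos[of k] by simp
    then show "k = 0" using m by (simp add: mult_le_0_iff)
  qed
qed

lemma strongly_convex_critical_point_unique:
  fixes f :: "'a::real_inner \<Rightarrow> real"
  assumes sc: "strongly_convex f" and df: "\<And>w. (f has_derivative (\<lambda>h. gf w \<bullet> h)) (at w)"
    and min: "\<And>u. f v \<le> f u" and crit: "gf w = 0"
  shows "v = w"
proof -
  obtain m where m: "m > 0" and fo: "\<And>u w. f w + gf w \<bullet> (u - w) + m / 2 * (norm (u - w))\<^sup>2 \<le> f u"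
    using strongly_convex_first_order[OF sc df] by blast
  have "f w + gf w \<bullet> (v - w) + m / 2 * (norm (v - w))\<^sup>2 \<le> f v" by (rule fo)
  then have "m / 2 * (norm (v - w))\<^sup>2 \<le> 0" using min[of w] crit by simp
  then show ?thesis using m by (simp add: mult_le_0_iff)
qed

section \<open>Derivative of an implicitly defined function\<close>

text \<open>Only the uniqueness of the zeros of \<open>G\<close> is assumed, not the continuity of \<open>f\<close>: the local
  inverse of \<open>(t, w) \<mapsto> (t, G (t, w))\<close> provided by the inverse function theorem then agrees with
  \<open>t \<mapsto> (t, f t)\<close> near \<open>t0\<close>.\<close>

lemma implicit_function_has_derivative:
  fixes G :: "'a::euclidean_space \<times> 'b::euclidean_space \<Rightarrow> 'b"
    and G' :: "'a \<times> 'b \<Rightarrow> ('a \<times> 'b) \<Rightarrow>\<^sub>L 'b"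
  assumes U: "open U" and s0: "(t0, f t0) \<in> U"
    and dG: "\<And>s. s \<in> U \<Longrightarrow> (G has_derivative blinfun_apply (G' s)) (at s)"
    and cG': "continuous_on U G'"
    and inj: "inj (\<lambda>k. G' (t0, f t0) (0, k))"
    and zero: "G (t0, f t0) = 0"
    and unique: "\<And>t w. (t, w) \<in> U \<Longrightarrow> G (t, w) = 0 \<Longrightarrow> f t = w"
  obtains f' where "(f has_derivative f') (at t0)" "\<And>h. G' (t0, f t0) (h, f' h) = 0"
proof -
  define s0 where "s0 = (t0, f t0)"
  define Phi where "Phi s = (fst s, G s)" for s
  have Phi'_bl: "bounded_linear (\<lambda>h. (fst h, G' s h))" for s
    by (intro bounded_linear_Pair bounded_linear_fst blinfun.bounded_linear_right)
  define Phi' where "Phi' s = Blinfun (\<lambda>h. (fst h, G' s h))" for s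
  have Phi'_apply: "blinfun_apply (Phi' s) h = (fst h, G' s h)" for s h
    by (simp add: Phi'_def bounded_linear_Blinfun_apply[OF Phi'_bl])
  have dPhi: "(Phi has_derivative blinfun_apply (Phi' s)) (at s)" if "s \<in> U" for s
    unfolding Phi_def[abs_def] Phi'_apply[abs_def]
    by (intro has_derivative_Pair has_derivative_fst[OF has_derivative_ident] dG that)
  have cPhi': "continuous_on U Phi'"
  proof (rule continuous_on_blinfun_componentwise)
    fix i show "continuous_on U (\<lambda>s. Phi' s i)" unfolding Phi'_apply by (intro continuous_intros cG')
  qed
  define Gt where "Gt h = G' s0 (h, 0)" for h
  define Gk where "Gk k = G' s0 (0, k)" for k
  have Phi'_s0: "Phi' s0 (h, k) = (h, Gt h + Gk k)" for h k
    using blinfun.add_right[of "G' s0" "(h, 0)" "(0, k)"] by (simp add: Phi'_apply Gt_def Gk_def)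
  have "linear Gk" unfolding Gk_def[abs_def]
    by (intro bounded_linear.linear bounded_linear_compose[OF blinfun.bounded_linear_right]
        bounded_linear_Pair bounded_linear_zero bounded_linear_ident)
  then obtain Li where Li: "linear Li" "Li \<circ> Gk = id"
    using linear_injective_left_inverse inj unfolding Gk_def s0_def by blast
  have Li_bl: "bounded_linear Li" using Li(1) linear_conv_bounded_linear by blast
  have Gt_bl: "bounded_linear Gt" unfolding Gt_def[abs_def]
    by (intro bounded_linear_compose[OF blinfun.bounded_linear_right] bounded_linear_Pair
        bounded_linear_zero bounded_linear_ident)
  define IL where "IL v = (fst v, Li (snd v - Gt (fst v)))" for v
  have IL_bl: "bounded_linear IL"
    unfolding IL_def[abs_def]
    by (intro bounded_linear_Pair bounded_linear_fst bounded_linear_compose[OF Li_bl]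
        bounded_linear_sub bounded_linear_snd bounded_linear_compose[OF Gt_bl])
  have inv: "Blinfun IL o\<^sub>L Phi' s0 = id_blinfun"
  proof (rule blinfun_eqI)
    fix i :: "'a \<times> 'b"
    have "Li (Gk (snd i)) = snd i" using Li(2) by (metis comp_apply id_apply)
    then show "blinfun_apply (Blinfun IL o\<^sub>L Phi' s0) i = blinfun_apply id_blinfun i"
      using Phi'_s0[of "fst i" "snd i"] by (simp add: bounded_linear_Blinfun_apply[OF IL_bl] IL_def)
  qed
  obtain U' V g g' where U': "U' \<subseteq> U" "s0 \<in> U'" and V: "open V" "Phi s0 \<in> V"
    and hom: "homeomorphism U' V Phi g" and dg: "\<And>y. y \<in> V \<Longrightarrow> (g has_derivative g' y) (at y)"
    using inverse_function_theorem[OF U dPhi cPhi' s0[folded s0_def] inv] by metis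
  have V0: "(t0, 0) \<in> V" using V zero by (simp add: Phi_def s0_def)
  define N where "N = (\<lambda>t. (t, 0)) -` V"
  have N: "open N" "t0 \<in> N"
    unfolding N_def using V0 by (auto intro!: open_vimage V(1) continuous_on_Pair continuous_on_id continuous_on_const)
  have g_N: "g (t, 0) \<in> U \<and> fst (g (t, 0)) = t \<and> G (g (t, 0)) = 0" if "t \<in> N" for t
  proof -
    have "Phi (g (t, 0)) = (t, 0)" "g (t, 0) \<in> U'"
      using hom that unfolding homeomorphism_def N_def by auto
    then show ?thesis using U' by (auto simp: Phi_def)
  qed
  have f_N: "f t = snd (g (t, 0))" if "t \<in> N" for t
    using unique[of t "snd (g (t, 0))"] g_N[OF that] by (metis prod.collapse)
  define f' where "f' h = snd (g' (t0, 0) (h, 0))" for h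
  have "((\<lambda>t. (t, 0)) has_derivative (\<lambda>h. (h, 0))) (at t0)"
    by (auto intro!: derivative_eq_intros)
  from has_derivative_compose[OF this dg[OF V0]]
  have "((\<lambda>t. g (t, 0)) has_derivative (\<lambda>h. g' (t0, 0) (h, 0))) (at t0)" .
  then have df: "(f has_derivative f') (at t0)"
    unfolding f'_def[abs_def]
    by (rule has_derivative_transform_within_open[OF has_derivative_snd N]) (metis f_N)
  have "G (t, f t) = 0" if "t \<in> N" for t
    using g_N[OF that] f_N[OF that] by (metis prod.collapse)
  then have "((\<lambda>t. G (t, f t)) has_derivative (\<lambda>h. 0)) (at t0)"
    by (intro has_derivative_transform_within_open[OF has_derivative_const N]) simp
  moreover have "((\<lambda>t. G (t, f t)) has_derivative (\<lambda>h. G' s0 (h, f' h))) (at t0)"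
    using has_derivative_compose[OF has_derivative_Pair[OF has_derivative_ident df] dG[OF s0]]
    by (simp add: s0_def)
  ultimately have "(\<lambda>h. 0) = (\<lambda>h. G' s0 (h, f' h))" by (rule has_derivative_unique)
  then show ?thesis using that df unfolding s0_def by metis
qed

section \<open>Sigmoid and softplus\<close>

definition softplus :: "real \<Rightarrow> real" where
  "softplus u = ln (1 + exp u)"

lemma sigmoid_eq: "sigmoid u = exp u / (1 + exp u)"
  unfolding sigmoid_def by (simp add: exp_minus field_simps)

lemma one_plus_exp_pos: "0 < 1 + exp (u::real)"
  by (simp add: add_pos_pos)

lemma one_plus_exp_neq_zero [simp]: "1 + exp (u::real) \<noteq> 0"
  using one_plus_exp_pos[of u] by linarith

lemma DERIV_softplus: "(softplus has_real_derivative sigmoid u) (at u)"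
  unfolding softplus_def sigmoid_eq
  by (rule derivative_eq_intros refl | simp add: one_plus_exp_pos)+

lemma DERIV_sigmoid: "(sigmoid has_real_derivative sigmoid u * (1 - sigmoid u)) (at u)"
proof -
  have "((\<lambda>u. exp u / (1 + exp u)) has_real_derivative sigmoid u * (1 - sigmoid u)) (at u)"
    unfolding sigmoid_eq using one_plus_exp_pos[of u]
    by (auto intro!: derivative_eq_intros simp: field_simps power2_eq_square)
  then show ?thesis by (simp add: sigmoid_eq[abs_def])
qed

lemmas has_derivative_softplus [derivative_intros] = DERIV_softplus[THEN DERIV_compose_FDERIV]
lemmas has_derivative_sigmoid [derivative_intros] = DERIV_sigmoid[THEN DERIV_compose_FDERIV]

lemma continuous_on_softplus [continuous_intros]:
  "continuous_on S f \<Longrightarrow> continuous_on S (\<lambda>w. softplus (f w))"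
  unfolding softplus_def by (intro continuous_intros) (auto simp: one_plus_exp_pos)

lemma continuous_on_sigmoid [continuous_intros]:
  "continuous_on S f \<Longrightarrow> continuous_on S (\<lambda>w. sigmoid (f w))"
  unfolding sigmoid_eq by (intro continuous_intros) auto

lemma lBT_eq_softplus:
  assumes "\<And>x y y'. Pstar x y' y = 1 - Pstar x y y'"
  shows "lBT Pstar r x y y' \<phi> = softplus (r \<phi> x y - r \<phi> x y') - Pstar x y y' * (r \<phi> x y - r \<phi> x y')"
proof -
  define d where "d = r \<phi> x y - r \<phi> x y'"
  have ln_sigmoid: "ln (sigmoid u) = - softplus (- u)" for u
    unfolding sigmoid_def softplus_def by (simp add: ln_div add_pos_pos)
  have "1 + exp (- d) = (1 + exp d) * exp (- d)" by (simp add: field_simps exp_minus)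
  then have softplus_neg: "softplus (- d) = softplus d - d"
    unfolding softplus_def by (simp only:) (simp add: ln_mult)
  have "lBT Pstar r x y y' \<phi> = - Pstar x y y' * ln (sigmoid d) - (1 - Pstar x y y') * ln (sigmoid (- d))"
    unfolding lBT_def Pphi_def assms[of x y y'] d_def by simp
  also have "\<dots> = softplus d - Pstar x y y' * d"
    unfolding ln_sigmoid softplus_neg by (simp add: algebra_simps)
  finally show ?thesis by (simp add: d_def)
qed

section \<open>The Bradley--Terry bilevel problem\<close>

locale bt_bilevel =
  fixes PX :: "'x::{metric_space, second_countable_topology} measure"
    and \<mu> :: "'y::{metric_space, second_countable_topology} measure"
    and U :: "'t::euclidean_space set"
    and pol :: "'t \<Rightarrow> 'x \<Rightarrow> 'y \<Rightarrow> real"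
    and piref :: "'x \<Rightarrow> 'y \<Rightarrow> real"
    and r :: "'p::euclidean_space \<Rightarrow> 'x \<Rightarrow> 'y \<Rightarrow> real"
    and \<Omega> :: "'p \<Rightarrow> real"
    and Pstar :: "'x \<Rightarrow> 'y \<Rightarrow> 'y \<Rightarrow> real"
    and phistar :: "'t \<Rightarrow> 'p"
    and \<theta> :: 't
  assumes XY_compact: "compact (UNIV :: ('x \<times> 'y) set)"
    and PX_prob: "prob_space PX" and PX_sets: "sets PX = sets borel"
    and mu_sets: "sets \<mu> = sets borel"
    and U_open: "open U" and theta_in: "\<theta> \<in> U"
    and pi_pos: "\<And>t x y. pol t x y > 0"
    and pi_C2: "C2_param U (\<lambda>t (x, y). pol t x y)"
    and piref_pos: "\<And>x y. piref x y > 0"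
    and piref_cont: "continuous_on UNIV (\<lambda>(x, y). piref x y)"
    and piref_density: "\<And>x. integrable \<mu> (piref x) \<and> (\<integral>y. piref x y \<partial>\<mu>) = 1"
    and r_C2: "C2_param UNIV (\<lambda>\<phi> (x, y). r \<phi> x y)"
    and Omega_C2: "C2_param UNIV (\<lambda>\<phi> (_::real). \<Omega> \<phi>)"
    and Pstar_range: "\<And>x y y'. 0 \<le> Pstar x y y' \<and> Pstar x y y' \<le> 1"
    and Pstar_compl: "\<And>x y y'. Pstar x y' y = 1 - Pstar x y y'"
    and Pstar_meas: "(\<lambda>(x, y, y'). Pstar x y y') \<in> borel_measurable borel"
    and LBT_sconv: "\<And>t. t \<in> U \<Longrightarrow> strongly_convex (LBT PX \<mu> pol piref Pstar r \<Omega> t)"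
    and phistar_min: "\<And>t \<phi>. t \<in> U \<Longrightarrow>
          LBT PX \<mu> pol piref Pstar r \<Omega> t (phistar t) \<le> LBT PX \<mu> pol piref Pstar r \<Omega> t \<phi>"
begin

lemma pol_neq_0 [simp]: "pol t x y \<noteq> 0" and piref_neq_0 [simp]: "piref x y \<noteq> 0"
  using pi_pos[of t x y] piref_pos[of x y] by auto

definition "pol_grad t x y = grad (\<lambda>t. pol t x y) t"
definition "r_grad \<phi> x y = grad (\<lambda>\<phi>. r \<phi> x y) \<phi>"
definition "r_hess \<phi> x y = hess (\<lambda>\<phi>. r \<phi> x y) \<phi>"

lemma compact_UNIV_y: "compact (UNIV :: 'y set)"
  using compact_continuous_image[OF continuous_on_snd[OF continuous_on_id] XY_compact] by simp

lemma compact_UNIV_xyy: "compact (UNIV :: (('x \<times> 'y) \<times> 'y) set)"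
  using compact_Times[OF XY_compact compact_UNIV_y] by simp

lemma finite_measure_PX: "finite_measure PX"
  using PX_prob by (simp add: prob_space_def)

text \<open>\<open>\<mu>\<close> is finite because it carries the density \<open>piref x\<close>, which is bounded below on the
  compact space of responses.\<close>

lemma finite_measure_mu: "finite_measure \<mu>"
proof -
  fix x :: 'x
  have "continuous_on UNIV (piref x)"
    using continuous_on_compose2[OF piref_cont continuous_on_Pair[OF continuous_on_const continuous_on_id]]
    by simp
  then obtain y0 where y0: "\<And>y. piref x y0 \<le> piref x y"
    using continuous_attains_inf[OF compact_UNIV_y] by auto
  have "ennreal (piref x y0) * emeasure \<mu> (space \<mu>) = (\<integral>\<^sup>+y. ennreal (piref x y0) \<partial>\<mu>)" by simp
  also have "\<dots> \<le> (\<integral>\<^sup>+y. ennreal (piref x y) \<partial>\<mu>)"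
    by (intro nn_integral_mono ennreal_leI y0)
  also have "\<dots> = ennreal (\<integral>y. piref x y \<partial>\<mu>)"
    using piref_density[of x] piref_pos by (intro nn_integral_eq_integral) (auto intro: less_imp_le)
  also have "\<dots> = 1" using piref_density[of x] by simp
  finally have "emeasure \<mu> (space \<mu>) \<noteq> \<infinity>"
    using piref_pos[of x y0] by (auto simp: ennreal_mult_top top_unique)
  then show ?thesis by (rule finite_measureI)
qed

lemma has_derivative_pol_at:
  "t \<in> U \<Longrightarrow> ((\<lambda>t. pol t x y) has_derivative (\<lambda>h. pol_grad t x y \<bullet> h)) (at t)"
  using pi_C2 unfolding C2_param_def pol_grad_def by (fastforce intro: has_derivative_grad)

lemma continuous_on_pol_pol_grad:
  "continuous_on (U \<times> UNIV) (\<lambda>(t, x, y). pol t x y)"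
  "continuous_on (U \<times> UNIV) (\<lambda>(t, x, y). pol_grad t x y)"
  using pi_C2 unfolding C2_param_def pol_grad_def by (simp_all add: case_prod_beta')

lemma has_derivative_r_at: "((\<lambda>\<phi>. r \<phi> x y) has_derivative (\<lambda>h. r_grad \<phi> x y \<bullet> h)) (at \<phi>)"
  using r_C2 unfolding C2_param_def r_grad_def by (fastforce intro: has_derivative_grad)

lemma has_derivative_r_grad_at: "((\<lambda>\<phi>. r_grad \<phi> x y) has_derivative r_hess \<phi> x y) (at \<phi>)"
  using r_C2 unfolding C2_param_def r_grad_def r_hess_def
  by (fastforce intro: has_derivative_hess simp: fun_eq_iff)

lemma continuous_on_r_r_grad_r_hess:
  "continuous_on UNIV (\<lambda>(\<phi>, x, y). r \<phi> x y)"
  "continuous_on UNIV (\<lambda>(\<phi>, x, y). r_grad \<phi> x y)"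
  "continuous_on UNIV (\<lambda>(\<phi>, x, y). r_hess \<phi> x y h)"
  using r_C2 unfolding C2_param_def r_grad_def r_hess_def by (simp_all add: case_prod_beta')

lemma has_derivative_Omega_at: "(\<Omega> has_derivative (\<lambda>h. grad \<Omega> \<phi> \<bullet> h)) (at \<phi>)"
  and has_derivative_grad_Omega_at: "(grad \<Omega> has_derivative hess \<Omega> \<phi>) (at \<phi>)"
  using Omega_C2 unfolding C2_param_def by (auto intro: has_derivative_grad has_derivative_hess)

lemma continuous_on_hess_Omega: "continuous_on UNIV (\<lambda>\<phi>. hess \<Omega> \<phi> h)"
proof -
  have "continuous_on (UNIV \<times> UNIV) (\<lambda>(\<phi>, _::real). hess \<Omega> \<phi> h)"
    using Omega_C2 unfolding C2_param_def by simp
  from continuous_on_compose2[OF this continuous_on_Pair[OF continuous_on_id continuous_on_const]]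
  show ?thesis by simp
qed

lemma has_derivative_pol [derivative_intros]:
  "(f has_derivative f') (at w within S) \<Longrightarrow> f w \<in> U \<Longrightarrow>
    ((\<lambda>w. pol (f w) x y) has_derivative (\<lambda>h. pol_grad (f w) x y \<bullet> f' h)) (at w within S)"
  by (rule has_derivative_compose[OF _ has_derivative_pol_at])

lemma has_derivative_r [derivative_intros]:
  "(f has_derivative f') (at w within S) \<Longrightarrow>
    ((\<lambda>w. r (f w) x y) has_derivative (\<lambda>h. r_grad (f w) x y \<bullet> f' h)) (at w within S)"
  by (rule has_derivative_compose[OF _ has_derivative_r_at])

lemma has_derivative_r_grad [derivative_intros]:
  "(f has_derivative f') (at w within S) \<Longrightarrow>
    ((\<lambda>w. r_grad (f w) x y) has_derivative (\<lambda>h. r_hess (f w) x y (f' h))) (at w within S)"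
  by (rule has_derivative_compose[OF _ has_derivative_r_grad_at])

lemma continuous_on_pol [continuous_intros]:
  "continuous_on S a \<Longrightarrow> continuous_on S b \<Longrightarrow> continuous_on S c \<Longrightarrow> (\<And>w. w \<in> S \<Longrightarrow> a w \<in> U) \<Longrightarrow>
    continuous_on S (\<lambda>w. pol (a w) (b w) (c w))"
  and continuous_on_pol_grad [continuous_intros]:
  "continuous_on S a \<Longrightarrow> continuous_on S b \<Longrightarrow> continuous_on S c \<Longrightarrow> (\<And>w. w \<in> S \<Longrightarrow> a w \<in> U) \<Longrightarrow>
    continuous_on S (\<lambda>w. pol_grad (a w) (b w) (c w))"
  by (auto intro: continuous_on_compose3 continuous_on_pol_pol_grad)

lemma continuous_on_r [continuous_intros]:
  "continuous_on S a \<Longrightarrow> continuous_on S b \<Longrightarrow> continuous_on S c \<Longrightarrow> continuous_on S (\<lambda>w. r (a w) (b w) (c w))"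
  and continuous_on_r_grad [continuous_intros]:
  "continuous_on S a \<Longrightarrow> continuous_on S b \<Longrightarrow> continuous_on S c \<Longrightarrow>
    continuous_on S (\<lambda>w. r_grad (a w) (b w) (c w))"
  and continuous_on_r_hess [continuous_intros]:
  "continuous_on S a \<Longrightarrow> continuous_on S b \<Longrightarrow> continuous_on S c \<Longrightarrow>
    continuous_on S (\<lambda>w. r_hess (a w) (b w) (c w) h)"
  using continuous_on_r_r_grad_r_hess by (auto intro: continuous_on_compose3[where A=UNIV])

lemma continuous_on_piref [continuous_intros]:
  "continuous_on S a \<Longrightarrow> continuous_on S b \<Longrightarrow> continuous_on S (\<lambda>w. piref (a w) (b w))"
  using continuous_on_compose2[OF piref_cont continuous_on_Pair] by fastforce

lemma uniformly_differentiable_family_on_pairs: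
  fixes F :: "'t \<times> 'p \<Rightarrow> 'z::{metric_space, second_countable_topology} \<Rightarrow> real"
  assumes "compact (UNIV :: 'z set)"
    and "continuous_on ((U \<times> UNIV) \<times> UNIV) (\<lambda>w. F (fst w) (snd w))"
    and "continuous_on ((U \<times> UNIV) \<times> UNIV) (\<lambda>w. D (fst w) (snd w))"
    and "\<And>t \<phi> z. t \<in> U \<Longrightarrow> ((\<lambda>s. F s z) has_derivative (\<lambda>h. D (t, \<phi>) z \<bullet> h)) (at (t, \<phi>))"
  shows "uniformly_differentiable_family (U \<times> UNIV) F D"
  using assms by (intro uniformly_differentiable_family_continuous) (auto simp: U_open open_Times)

definition integral_xy :: "('x \<times> 'y \<Rightarrow> 'b::{banach, second_countable_topology}) \<Rightarrow> 'b" where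
  "integral_xy f = (\<integral>x. \<integral>y. f (x, y) \<partial>\<mu> \<partial>PX)"

definition integral_xyy :: "(('x \<times> 'y) \<times> 'y \<Rightarrow> 'b::{banach, second_countable_topology}) \<Rightarrow> 'b" where
  "integral_xyy f = (\<integral>x. \<integral>y. \<integral>y'. f ((x, y), y') \<partial>\<mu> \<partial>\<mu> \<partial>PX)"

lemma integral_xy_bounded_linear:
  fixes T :: "'b::{banach, second_countable_topology} \<Rightarrow> 'c::{banach, second_countable_topology}"
  assumes f: "bounded_borel f" and T: "bounded_linear T"
  shows "integral_xy (\<lambda>z. T (f z)) = T (integral_xy f)"
proof -
  note int = integrable_bounded_borel[OF _ finite_measure_mu mu_sets]
  have "integral_xy (\<lambda>z. T (f z)) = (\<integral>x. T (\<integral>y. f (x, y) \<partial>\<mu>) \<partial>PX)"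
    unfolding integral_xy_def by (simp add: integral_bounded_linear[OF T int[OF bounded_borel_slice[OF f]]])
  also have "\<dots> = T (integral_xy f)"
    unfolding integral_xy_def
    by (intro integral_bounded_linear T integrable_bounded_borel[OF _ finite_measure_PX PX_sets]
        bounded_borel_integral_slice[OF f finite_measure_mu mu_sets])
  finally show ?thesis .
qed

lemma integral_xyy_bounded_linear:
  fixes T :: "'b::{banach, second_countable_topology} \<Rightarrow> 'c::{banach, second_countable_topology}"
  assumes f: "bounded_borel f" and T: "bounded_linear T"
  shows "integral_xyy (\<lambda>z. T (f z)) = T (integral_xyy f)"
proof -
  note int = integrable_bounded_borel[OF _ finite_measure_mu mu_sets]
  have f2: "bounded_borel (\<lambda>w. \<integral>y'. f (w, y') \<partial>\<mu>)"
    by (rule bounded_borel_integral_slice[OF f finite_measure_mu mu_sets])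
  have "integral_xyy (\<lambda>z. T (f z)) = integral_xy (\<lambda>w. T (\<integral>y'. f (w, y') \<partial>\<mu>))"
    unfolding integral_xyy_def integral_xy_def
    by (simp add: integral_bounded_linear[OF T int[OF bounded_borel_slice[OF f]]])
  also have "\<dots> = T (integral_xyy f)"
    unfolding integral_xy_bounded_linear[OF f2 T] by (simp add: integral_xy_def integral_xyy_def)
  finally show ?thesis .
qed

lemma integral_xy_add:
  fixes f g :: "'x \<times> 'y \<Rightarrow> real"
  assumes f: "bounded_borel f" and g: "bounded_borel g"
  shows "integral_xy (\<lambda>z. f z + g z) = integral_xy f + integral_xy g"
proof -
  note int_y = integrable_bounded_borel[OF bounded_borel_slice finite_measure_mu mu_sets]
  note int_x = integrable_bounded_borel[OF bounded_borel_integral_slice[OF _ finite_measure_mu mu_sets]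
      finite_measure_PX PX_sets]
  show ?thesis
    unfolding integral_xy_def using int_y[OF f] int_y[OF g] int_x[OF f] int_x[OF g] by simp
qed

lemma uniformly_differentiable_family_integral_xy:
  fixes F :: "'a::euclidean_space \<Rightarrow> 'x \<times> 'y \<Rightarrow> real"
  assumes "uniformly_differentiable_family S F D"
  shows "uniformly_differentiable_family S (\<lambda>s (_::real). integral_xy (F s)) (\<lambda>s _. integral_xy (D s))"
  using uniformly_differentiable_family_integral[OF uniformly_differentiable_family_snd[OF
        uniformly_differentiable_family_integral[OF assms finite_measure_mu mu_sets], where 'w=real]
      finite_measure_PX PX_sets]
  by (simp add: integral_xy_def)

lemma uniformly_differentiable_family_integral_xyy:
  fixes F :: "'a::euclidean_space \<Rightarrow> ('x \<times> 'y) \<times> 'y \<Rightarrow> real"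
  assumes "uniformly_differentiable_family S F D"
  shows "uniformly_differentiable_family S (\<lambda>s (_::real). integral_xyy (F s)) (\<lambda>s _. integral_xyy (D s))"
  using uniformly_differentiable_family_integral_xy[OF
      uniformly_differentiable_family_integral[OF assms finite_measure_mu mu_sets]]
  by (simp add: integral_xy_def integral_xyy_def)

lemma has_derivative_integral_xy:
  "uniformly_differentiable_family S F D \<Longrightarrow> s \<in> S \<Longrightarrow>
    ((\<lambda>s. integral_xy (F s)) has_derivative (\<lambda>h. integral_xy (D s) \<bullet> h)) (at s)"
  using uniformly_differentiable_family_has_derivative[OF uniformly_differentiable_family_integral_xy] .

lemma has_derivative_integral_xyy:
  "uniformly_differentiable_family S F D \<Longrightarrow> s \<in> S \<Longrightarrow>
    ((\<lambda>s. integral_xyy (F s)) has_derivative (\<lambda>h. integral_xyy (D s) \<bullet> h)) (at s)"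
  using uniformly_differentiable_family_has_derivative[OF uniformly_differentiable_family_integral_xyy] .

lemma continuous_on_integral_xyy_deriv:
  "uniformly_differentiable_family S F D \<Longrightarrow> continuous_on S (\<lambda>s. integral_xyy (D s))"
  using uniformly_differentiable_family_continuous_on_deriv[OF uniformly_differentiable_family_integral_xyy] .

definition softplus_term :: "'t \<times> 'p \<Rightarrow> ('x \<times> 'y) \<times> 'y \<Rightarrow> real" where
  "softplus_term = (\<lambda>(t, \<phi>) ((x, y), y'). pol t x y * piref x y' * softplus (r \<phi> x y - r \<phi> x y'))"

definition softplus_term_grad :: "'t \<times> 'p \<Rightarrow> ('x \<times> 'y) \<times> 'y \<Rightarrow> 't \<times> 'p" where
  "softplus_term_grad = (\<lambda>(t, \<phi>) ((x, y), y').
     ((piref x y' * softplus (r \<phi> x y - r \<phi> x y')) *\<^sub>R pol_grad t x y,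
      (pol t x y * piref x y' * sigmoid (r \<phi> x y - r \<phi> x y')) *\<^sub>R (r_grad \<phi> x y - r_grad \<phi> x y')))"

definition margin_term :: "'t \<times> 'p \<Rightarrow> ('x \<times> 'y) \<times> 'y \<Rightarrow> real" where
  "margin_term = (\<lambda>(t, \<phi>) ((x, y), y'). - (pol t x y * piref x y' * (r \<phi> x y - r \<phi> x y')))"

definition margin_term_grad :: "'t \<times> 'p \<Rightarrow> ('x \<times> 'y) \<times> 'y \<Rightarrow> 't \<times> 'p" where
  "margin_term_grad = (\<lambda>(t, \<phi>) ((x, y), y').
     ((- (piref x y' * (r \<phi> x y - r \<phi> x y'))) *\<^sub>R pol_grad t x y,
      (- (pol t x y * piref x y')) *\<^sub>R (r_grad \<phi> x y - r_grad \<phi> x y')))"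

definition pref :: "('x \<times> 'y) \<times> 'y \<Rightarrow> real" where
  "pref = (\<lambda>((x, y), y'). Pstar x y y')"

lemma uniformly_differentiable_family_softplus_term:
  "uniformly_differentiable_family (U \<times> UNIV) softplus_term softplus_term_grad"
proof (rule uniformly_differentiable_family_on_pairs[OF compact_UNIV_xyy])
  show "continuous_on ((U \<times> UNIV) \<times> UNIV) (\<lambda>w. softplus_term (fst w) (snd w))"
    unfolding softplus_term_def case_prod_beta' by (intro continuous_intros) (auto simp: mem_Times_iff)
  show "continuous_on ((U \<times> UNIV) \<times> UNIV) (\<lambda>w. softplus_term_grad (fst w) (snd w))"
    unfolding softplus_term_grad_def case_prod_beta' by (intro continuous_intros) (auto simp: mem_Times_iff)
  fix t \<phi> z assume "t \<in> U"
  then show "((\<lambda>s. softplus_term s z) has_derivative (\<lambda>h. softplus_term_grad (t, \<phi>) z \<bullet> h)) (at (t, \<phi>))"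
    unfolding softplus_term_def softplus_term_grad_def case_prod_beta'
    by (auto intro!: derivative_eq_intros simp: algebra_simps)
qed

lemma uniformly_differentiable_family_margin_term:
  "uniformly_differentiable_family (U \<times> UNIV) margin_term margin_term_grad"
proof (rule uniformly_differentiable_family_on_pairs[OF compact_UNIV_xyy])
  show "continuous_on ((U \<times> UNIV) \<times> UNIV) (\<lambda>w. margin_term (fst w) (snd w))"
    unfolding margin_term_def case_prod_beta' by (intro continuous_intros) (auto simp: mem_Times_iff)
  show "continuous_on ((U \<times> UNIV) \<times> UNIV) (\<lambda>w. margin_term_grad (fst w) (snd w))"
    unfolding margin_term_grad_def case_prod_beta' by (intro continuous_intros) (auto simp: mem_Times_iff)
  fix t \<phi> z assume "t \<in> U"
  then show "((\<lambda>s. margin_term s z) has_derivative (\<lambda>h. margin_term_grad (t, \<phi>) z \<bullet> h)) (at (t, \<phi>))"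
    unfolding margin_term_def margin_term_grad_def case_prod_beta'
    by (auto intro!: derivative_eq_intros simp: algebra_simps)
qed

lemma bounded_borel_pref: "bounded_borel pref"
proof -
  have "(\<lambda>((x, y), y'). (x, y, y')) \<in> borel_measurable (borel :: (('x \<times> 'y) \<times> 'y) measure)"
    unfolding case_prod_beta' by (intro borel_measurable_continuous_onI continuous_intros)
  from measurable_compose[OF this Pstar_meas] have "pref \<in> borel_measurable borel"
    by (simp add: pref_def case_prod_beta')
  moreover have "norm (pref z) \<le> 1" for z
    using Pstar_range by (auto simp: pref_def abs_le_iff split: prod.split)
  ultimately show ?thesis unfolding bounded_borel_def by blast
qed

text \<open>Splitting off the weight \<open>pref\<close> keeps the merely measurable \<open>P\<^sup>*\<close> out of the pieces
  handled by the continuity criterion.\<close>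

definition "pair_loss s z = softplus_term s z + pref z * margin_term s z"
definition "pair_loss_grad s z = softplus_term_grad s z + pref z *\<^sub>R margin_term_grad s z"

lemma pair_loss_eq: "pair_loss (t, \<phi>) ((x, y), y') = pol t x y * piref x y' * lBT Pstar r x y y' \<phi>"
  by (simp add: pair_loss_def softplus_term_def margin_term_def pref_def lBT_eq_softplus[OF Pstar_compl]
      algebra_simps)

lemma uniformly_differentiable_family_pair_loss:
  "uniformly_differentiable_family (U \<times> UNIV) pair_loss pair_loss_grad"
  unfolding pair_loss_def[abs_def] pair_loss_grad_def[abs_def]
  by (intro uniformly_differentiable_family_add uniformly_differentiable_family_weight
      uniformly_differentiable_family_softplus_term uniformly_differentiable_family_margin_term bounded_borel_pref)

lemma LBT_eq_integral_xyy: "LBT PX \<mu> pol piref Pstar r \<Omega> t \<phi> = integral_xyy (pair_loss (t, \<phi>)) + \<Omega> \<phi>"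
  unfolding LBT_def integral_xyy_def pair_loss_eq ..

definition "follower_grad t \<phi> = snd (integral_xyy (pair_loss_grad (t, \<phi>))) + grad \<Omega> \<phi>"

lemma has_derivative_LBT:
  assumes "t \<in> U"
  shows "(LBT PX \<mu> pol piref Pstar r \<Omega> t has_derivative (\<lambda>k. follower_grad t \<phi> \<bullet> k)) (at \<phi>)"
proof -
  have "((\<lambda>\<phi>. (t, \<phi>)) has_derivative (\<lambda>k. (0, k))) (at \<phi>)"
    by (auto intro!: derivative_eq_intros)
  from has_derivative_compose[OF this has_derivative_integral_xyy[OF uniformly_differentiable_family_pair_loss]]
  have "((\<lambda>\<phi>. integral_xyy (pair_loss (t, \<phi>))) has_derivative
      (\<lambda>k. integral_xyy (pair_loss_grad (t, \<phi>)) \<bullet> (0, k))) (at \<phi>)"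
    using assms by simp
  from has_derivative_add[OF this has_derivative_Omega_at] show ?thesis
    unfolding LBT_eq_integral_xyy[abs_def] follower_grad_def
    by (simp add: inner_Pair_0 inner_add_left)
qed

lemma grad_LBT: "t \<in> U \<Longrightarrow> grad (LBT PX \<mu> pol piref Pstar r \<Omega> t) = follower_grad t"
  using grad_eqI[OF has_derivative_LBT] by blast

lemma follower_grad_eq_0:
  assumes "t \<in> U"
  shows "follower_grad t (phistar t) = 0"
proof -
  have "(\<lambda>k. follower_grad t (phistar t) \<bullet> k) = (\<lambda>k. 0)"
    using has_derivative_LBT[OF assms] phistar_min[OF assms]
    by (intro differential_zero_maxmin[of "phistar t" UNIV "LBT PX \<mu> pol piref Pstar r \<Omega> t"]) auto
  then show ?thesis by (metis inner_eq_zero_iff)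
qed

lemma follower_grad_zero_unique: "t \<in> U \<Longrightarrow> follower_grad t w = 0 \<Longrightarrow> phistar t = w"
  by (rule strongly_convex_critical_point_unique[OF LBT_sconv has_derivative_LBT phistar_min])

lemma r_hess_inner_adjoint: "r_hess \<phi> x y k \<bullet> e = adjoint (r_hess \<phi> x y) e \<bullet> k"
  using adjoint_clauses(2)[OF has_derivative_linear[OF has_derivative_r_grad_at]]
  by (simp add: inner_commute)

lemma continuous_on_adjoint_r_hess [continuous_intros]:
  "continuous_on S a \<Longrightarrow> continuous_on S b \<Longrightarrow> continuous_on S c \<Longrightarrow>
    continuous_on S (\<lambda>w. adjoint (r_hess (a w) (b w) (c w)) e)"
  unfolding adjoint_eq_sum_Basis[OF has_derivative_linear[OF has_derivative_r_grad_at]]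
  by (intro continuous_intros)

text \<open>Gradients, with respect to \<open>(t, \<phi>)\<close>, of the \<open>e\<close>-components of the \<open>\<phi>\<close>-gradients above.\<close>

definition softplus_term_grad2 :: "'p \<Rightarrow> 't \<times> 'p \<Rightarrow> ('x \<times> 'y) \<times> 'y \<Rightarrow> 't \<times> 'p" where
  "softplus_term_grad2 e = (\<lambda>(t, \<phi>) ((x, y), y').
     ((piref x y' * sigmoid (r \<phi> x y - r \<phi> x y') * ((r_grad \<phi> x y - r_grad \<phi> x y') \<bullet> e)) *\<^sub>R pol_grad t x y,
      (pol t x y * piref x y' * (sigmoid (r \<phi> x y - r \<phi> x y') * (1 - sigmoid (r \<phi> x y - r \<phi> x y'))) *
         ((r_grad \<phi> x y - r_grad \<phi> x y') \<bullet> e)) *\<^sub>R (r_grad \<phi> x y - r_grad \<phi> x y') +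
      (pol t x y * piref x y' * sigmoid (r \<phi> x y - r \<phi> x y')) *\<^sub>R
         (adjoint (r_hess \<phi> x y) e - adjoint (r_hess \<phi> x y') e)))"

definition margin_term_grad2 :: "'p \<Rightarrow> 't \<times> 'p \<Rightarrow> ('x \<times> 'y) \<times> 'y \<Rightarrow> 't \<times> 'p" where
  "margin_term_grad2 e = (\<lambda>(t, \<phi>) ((x, y), y').
     ((- (piref x y' * ((r_grad \<phi> x y - r_grad \<phi> x y') \<bullet> e))) *\<^sub>R pol_grad t x y,
      (- (pol t x y * piref x y')) *\<^sub>R (adjoint (r_hess \<phi> x y) e - adjoint (r_hess \<phi> x y') e)))"

definition "pair_loss_grad2 e s z = softplus_term_grad2 e s z + pref z *\<^sub>R margin_term_grad2 e s z"

lemma uniformly_differentiable_family_softplus_term_grad: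
  "uniformly_differentiable_family (U \<times> UNIV) (\<lambda>s z. snd (softplus_term_grad s z) \<bullet> e) (softplus_term_grad2 e)"
proof (rule uniformly_differentiable_family_on_pairs[OF compact_UNIV_xyy])
  show "continuous_on ((U \<times> UNIV) \<times> UNIV) (\<lambda>w. snd (softplus_term_grad (fst w) (snd w)) \<bullet> e)"
    unfolding softplus_term_grad_def case_prod_beta' snd_conv
    by (intro continuous_intros) (auto simp: mem_Times_iff)
  show "continuous_on ((U \<times> UNIV) \<times> UNIV) (\<lambda>w. softplus_term_grad2 e (fst w) (snd w))"
    unfolding softplus_term_grad2_def case_prod_beta' by (intro continuous_intros) (auto simp: mem_Times_iff)
  fix t \<phi> z assume "t \<in> U"
  then show "((\<lambda>s. snd (softplus_term_grad s z) \<bullet> e) has_derivative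
      (\<lambda>h. softplus_term_grad2 e (t, \<phi>) z \<bullet> h)) (at (t, \<phi>))"
    unfolding softplus_term_grad_def softplus_term_grad2_def case_prod_beta' snd_conv
    by (auto intro!: derivative_eq_intros simp: algebra_simps r_hess_inner_adjoint)
qed

lemma uniformly_differentiable_family_margin_term_grad:
  "uniformly_differentiable_family (U \<times> UNIV) (\<lambda>s z. snd (margin_term_grad s z) \<bullet> e) (margin_term_grad2 e)"
proof (rule uniformly_differentiable_family_on_pairs[OF compact_UNIV_xyy])
  show "continuous_on ((U \<times> UNIV) \<times> UNIV) (\<lambda>w. snd (margin_term_grad (fst w) (snd w)) \<bullet> e)"
    unfolding margin_term_grad_def case_prod_beta' snd_conv
    by (intro continuous_intros) (auto simp: mem_Times_iff)
  show "continuous_on ((U \<times> UNIV) \<times> UNIV) (\<lambda>w. margin_term_grad2 e (fst w) (snd w))"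
    unfolding margin_term_grad2_def case_prod_beta' by (intro continuous_intros) (auto simp: mem_Times_iff)
  fix t \<phi> z assume "t \<in> U"
  then show "((\<lambda>s. snd (margin_term_grad s z) \<bullet> e) has_derivative
      (\<lambda>h. margin_term_grad2 e (t, \<phi>) z \<bullet> h)) (at (t, \<phi>))"
    unfolding margin_term_grad_def margin_term_grad2_def case_prod_beta' snd_conv
    by (auto intro!: derivative_eq_intros simp: algebra_simps r_hess_inner_adjoint)
qed

lemma uniformly_differentiable_family_pair_loss_grad:
  "uniformly_differentiable_family (U \<times> UNIV) (\<lambda>s z. snd (pair_loss_grad s z) \<bullet> e) (pair_loss_grad2 e)"
proof -
  have "(\<lambda>s z. snd (pair_loss_grad s z) \<bullet> e) =
      (\<lambda>s z. snd (softplus_term_grad s z) \<bullet> e + pref z * (snd (margin_term_grad s z) \<bullet> e))"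
    by (simp add: pair_loss_grad_def fun_eq_iff inner_add_left)
  then show ?thesis
    unfolding pair_loss_grad2_def[abs_def]
    by (simp only:) (intro uniformly_differentiable_family_add uniformly_differentiable_family_weight
        uniformly_differentiable_family_softplus_term_grad uniformly_differentiable_family_margin_term_grad
        bounded_borel_pref)
qed

definition "follower_jacobian_row e s = integral_xyy (pair_loss_grad2 e s) + (0, adjoint (hess \<Omega> (snd s)) e)"

definition "follower_jacobian s = Blinfun (\<lambda>h. \<Sum>e\<in>Basis. (follower_jacobian_row e s \<bullet> h) *\<^sub>R e)"

lemma follower_jacobian_apply:
  "follower_jacobian s h = (\<Sum>e\<in>Basis. (follower_jacobian_row e s \<bullet> h) *\<^sub>R e)"
proof -
  have "bounded_linear (\<lambda>h. \<Sum>e\<in>Basis. (follower_jacobian_row e s \<bullet> h) *\<^sub>R e)"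
    by (intro bounded_linear_sum bounded_linear_compose[OF bounded_linear_scaleR_left]
        bounded_linear_inner_right)
  then show ?thesis unfolding follower_jacobian_def by (simp add: bounded_linear_Blinfun_apply)
qed

lemma has_derivative_follower_grad_inner:
  assumes s: "s \<in> U \<times> UNIV"
  shows "((\<lambda>s. follower_grad (fst s) (snd s) \<bullet> e) has_derivative (\<lambda>h. follower_jacobian_row e s \<bullet> h)) (at s)"
proof -
  have eq: "follower_grad (fst s) (snd s) \<bullet> e =
      integral_xyy (\<lambda>z. snd (pair_loss_grad s z) \<bullet> e) + grad \<Omega> (snd s) \<bullet> e" if "s \<in> U \<times> UNIV" for s
    using integral_xyy_bounded_linear[where T="\<lambda>v. snd v \<bullet> e", OF
        uniformly_differentiable_familyD(3)[OF uniformly_differentiable_family_pair_loss that]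
        bounded_linear_inner_left_comp[OF bounded_linear_snd]]
    by (simp add: follower_grad_def inner_add_left)
  have hess: "hess \<Omega> (snd s) (snd h) \<bullet> e = (0, adjoint (hess \<Omega> (snd s)) e) \<bullet> h" for h :: "'t \<times> 'p"
    using adjoint_clauses(2)[OF has_derivative_linear[OF has_derivative_grad_Omega_at]]
    by (cases h) (simp add: inner_commute)
  have "((\<lambda>s. integral_xyy (\<lambda>z. snd (pair_loss_grad s z) \<bullet> e) + grad \<Omega> (snd s) \<bullet> e) has_derivative
      (\<lambda>h. integral_xyy (pair_loss_grad2 e s) \<bullet> h + hess \<Omega> (snd s) (snd h) \<bullet> e)) (at s)"
    by (intro has_derivative_add has_derivative_integral_xyy[OF uniformly_differentiable_family_pair_loss_grad s]
        has_derivative_inner_left has_derivative_compose[OF has_derivative_snd has_derivative_grad_Omega_at]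
        has_derivative_ident)
  then have "((\<lambda>s. integral_xyy (\<lambda>z. snd (pair_loss_grad s z) \<bullet> e) + grad \<Omega> (snd s) \<bullet> e) has_derivative
      (\<lambda>h. follower_jacobian_row e s \<bullet> h)) (at s)"
    by (simp add: hess follower_jacobian_row_def inner_add_left)
  then show ?thesis
    by (rule has_derivative_transform_within_open[OF _ open_Times[OF U_open open_UNIV] s]) (simp add: eq)
qed

lemma has_derivative_follower_grad:
  assumes "s \<in> U \<times> UNIV"
  shows "((\<lambda>s. follower_grad (fst s) (snd s)) has_derivative blinfun_apply (follower_jacobian s)) (at s)"
proof -
  have "((\<lambda>s. \<Sum>e\<in>Basis. (follower_grad (fst s) (snd s) \<bullet> e) *\<^sub>R e) has_derivative
      (\<lambda>h. \<Sum>e\<in>Basis. (follower_jacobian_row e s \<bullet> h) *\<^sub>R e)) (at s)"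
    by (intro has_derivative_sum has_derivative_scaleR_left has_derivative_follower_grad_inner assms)
  then show ?thesis by (simp add: euclidean_representation follower_jacobian_apply[abs_def])
qed

lemma continuous_on_follower_jacobian: "continuous_on (U \<times> UNIV) follower_jacobian"
proof (rule continuous_on_blinfun_componentwise)
  have "continuous_on (U \<times> UNIV) (\<lambda>s. integral_xyy (pair_loss_grad2 e s))" for e
    by (rule continuous_on_integral_xyy_deriv[OF uniformly_differentiable_family_pair_loss_grad])
  moreover have "continuous_on (U \<times> UNIV) (\<lambda>s. adjoint (hess \<Omega> (snd s)) e)" for e
    unfolding adjoint_eq_sum_Basis[OF has_derivative_linear[OF has_derivative_grad_Omega_at]]
    by (intro continuous_intros continuous_on_compose2[OF continuous_on_hess_Omega]) auto
  ultimately show "continuous_on (U \<times> UNIV) (\<lambda>s. follower_jacobian s i)" for i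
    unfolding follower_jacobian_apply follower_jacobian_row_def by (intro continuous_intros)
qed

subsection \<open>Differentiability of the best response\<close>

definition "follower_hess k = follower_jacobian (\<theta>, phistar \<theta>) (0, k)"
definition "follower_mixed h = follower_jacobian (\<theta>, phistar \<theta>) (h, 0)"

lemma follower_jacobian_split:
  "follower_jacobian (\<theta>, phistar \<theta>) (h, k) = follower_mixed h + follower_hess k"
  using blinfun.add_right[of _ "(h, 0)" "(0, k)"] by (simp add: follower_mixed_def follower_hess_def)

lemma bounded_linear_follower_hess: "bounded_linear follower_hess"
  unfolding follower_hess_def[abs_def]
  by (intro bounded_linear_compose[OF blinfun.bounded_linear_right] bounded_linear_Pair
      bounded_linear_zero bounded_linear_ident)

lemma has_derivative_follower_grad_at_theta:
  "(follower_grad \<theta> has_derivative follower_hess) (at (phistar \<theta>))"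
proof -
  have "((\<lambda>\<phi>. (\<theta>, \<phi>)) has_derivative (\<lambda>k. (0, k))) (at (phistar \<theta>))"
    by (auto intro!: derivative_eq_intros)
  from has_derivative_compose[OF this has_derivative_follower_grad] theta_in show ?thesis
    by (simp add: follower_hess_def[abs_def])
qed

lemma inj_follower_hess: "inj follower_hess"
  by (rule strongly_convex_derivative_gradient_inj[OF LBT_sconv[OF theta_in] has_derivative_LBT[OF theta_in]
        has_derivative_follower_grad_at_theta])

lemma hess_LBT: "hess (LBT PX \<mu> pol piref Pstar r \<Omega> \<theta>) (phistar \<theta>) = follower_hess"
  unfolding hess_def grad_LBT[OF theta_in]
  by (rule frechet_derivative_at[OF has_derivative_follower_grad_at_theta, symmetric])

lemma phistar_has_derivative:
  obtains \<psi>' where "(phistar has_derivative \<psi>') (at \<theta>)" "\<And>h. follower_mixed h + follower_hess (\<psi>' h) = 0"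
proof -
  obtain \<psi>' where "(phistar has_derivative \<psi>') (at \<theta>)" "\<And>h. follower_jacobian (\<theta>, phistar \<theta>) (h, \<psi>' h) = 0"
  proof (rule implicit_function_has_derivative[where G="\<lambda>s. follower_grad (fst s) (snd s)"])
    show "open (U \<times> UNIV)" by (simp add: U_open open_Times)
    show "(\<theta>, phistar \<theta>) \<in> U \<times> UNIV" using theta_in by simp
    show "inj (\<lambda>k. follower_jacobian (\<theta>, phistar \<theta>) (0, k))"
      using inj_follower_hess unfolding follower_hess_def .
  qed (use has_derivative_follower_grad continuous_on_follower_jacobian follower_grad_eq_0[OF theta_in]
      follower_grad_zero_unique in auto)
  then show ?thesis using that follower_jacobian_split by metis
qed

definition reward_term :: "'t \<times> 'p \<Rightarrow> 'x \<times> 'y \<Rightarrow> real" where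
  "reward_term = (\<lambda>(t, \<phi>) (x, y). pol t x y * r \<phi> x y)"

definition reward_term_grad :: "'t \<times> 'p \<Rightarrow> 'x \<times> 'y \<Rightarrow> 't \<times> 'p" where
  "reward_term_grad = (\<lambda>(t, \<phi>) (x, y). (r \<phi> x y *\<^sub>R pol_grad t x y, pol t x y *\<^sub>R r_grad \<phi> x y))"

definition kl_term :: "'t \<Rightarrow> 'x \<times> 'y \<Rightarrow> real" where
  "kl_term = (\<lambda>t (x, y). pol t x y * ln (pol t x y / piref x y))"

definition kl_term_grad :: "'t \<Rightarrow> 'x \<times> 'y \<Rightarrow> 't" where
  "kl_term_grad = (\<lambda>t (x, y). (ln (pol t x y / piref x y) + 1) *\<^sub>R pol_grad t x y)"

lemma uniformly_differentiable_family_reward_term: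
  "uniformly_differentiable_family (U \<times> UNIV) reward_term reward_term_grad"
proof (rule uniformly_differentiable_family_on_pairs[OF XY_compact])
  show "continuous_on ((U \<times> UNIV) \<times> UNIV) (\<lambda>w. reward_term (fst w) (snd w))"
    unfolding reward_term_def case_prod_beta' by (intro continuous_intros) (auto simp: mem_Times_iff)
  show "continuous_on ((U \<times> UNIV) \<times> UNIV) (\<lambda>w. reward_term_grad (fst w) (snd w))"
    unfolding reward_term_grad_def case_prod_beta' by (intro continuous_intros) (auto simp: mem_Times_iff)
  fix t \<phi> z assume "t \<in> U"
  then show "((\<lambda>s. reward_term s z) has_derivative (\<lambda>h. reward_term_grad (t, \<phi>) z \<bullet> h)) (at (t, \<phi>))"
    unfolding reward_term_def reward_term_grad_def case_prod_beta'
    by (auto intro!: derivative_eq_intros simp: algebra_simps)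
qed

lemma uniformly_differentiable_family_kl_term: "uniformly_differentiable_family U kl_term kl_term_grad"
proof (rule uniformly_differentiable_family_continuous[OF U_open XY_compact])
  show "continuous_on (U \<times> UNIV) (\<lambda>w. kl_term (fst w) (snd w))"
    unfolding kl_term_def case_prod_beta' using pi_pos piref_pos
    by (intro continuous_intros) (auto simp: mem_Times_iff)
  show "continuous_on (U \<times> UNIV) (\<lambda>w. kl_term_grad (fst w) (snd w))"
    unfolding kl_term_grad_def case_prod_beta' using pi_pos piref_pos
    by (intro continuous_intros) (auto simp: mem_Times_iff)
  fix t z assume "t \<in> U"
  have "kl_term t' z = pol t' (fst z) (snd z) * (ln (pol t' (fst z) (snd z)) - ln (piref (fst z) (snd z)))" for t'
    using pi_pos piref_pos by (simp add: kl_term_def case_prod_beta' ln_div)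
  moreover have "((\<lambda>t. pol t (fst z) (snd z) * (ln (pol t (fst z) (snd z)) - ln (piref (fst z) (snd z))))
      has_derivative (\<lambda>h. kl_term_grad t z \<bullet> h)) (at t)"
    using \<open>t \<in> U\<close> pi_pos[of t "fst z" "snd z"] piref_pos[of "fst z" "snd z"]
    by (auto intro!: derivative_eq_intros simp: kl_term_grad_def case_prod_beta' ln_div algebra_simps)
  ultimately show "((\<lambda>t. kl_term t z) has_derivative (\<lambda>h. kl_term_grad t z \<bullet> h)) (at t)" by simp
qed

lemma KL_integral_eq: "(\<integral>x. KL \<mu> pol piref t x \<partial>PX) = integral_xy (kl_term t)"
  by (simp add: KL_def integral_xy_def kl_term_def)

lemma Jobj_eq:
  assumes "t \<in> U"
  shows "Jobj PX \<mu> pol piref \<beta> r t \<phi> = integral_xy (reward_term (t, \<phi>)) - \<beta> * integral_xy (kl_term t)"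
proof -
  note integrable_x = integrable_bounded_borel[OF bounded_borel_integral_slice[OF _ finite_measure_mu mu_sets]
      finite_measure_PX PX_sets]
  have "integrable PX (\<lambda>x. \<integral>y. reward_term (t, \<phi>) (x, y) \<partial>\<mu>)" "integrable PX (\<lambda>x. \<integral>y. kl_term t (x, y) \<partial>\<mu>)"
    using assms uniformly_differentiable_familyD(2)[OF uniformly_differentiable_family_reward_term]
      uniformly_differentiable_familyD(2)[OF uniformly_differentiable_family_kl_term]
    by (auto intro: integrable_x)
  then show ?thesis
    unfolding Jobj_def KL_def integral_xy_def by (simp add: reward_term_def kl_term_def)
qed

lemma has_derivative_leader_objective:
  obtains \<psi>' where
    "((\<lambda>t. Jobj PX \<mu> pol piref \<beta> r t (phistar t)) has_derivative
       (\<lambda>h. integral_xy (reward_term_grad (\<theta>, phistar \<theta>)) \<bullet> (h, \<psi>' h) - \<beta> * (integral_xy (kl_term_grad \<theta>) \<bullet> h)))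
       (at \<theta>)"
    "\<And>h. follower_mixed h + follower_hess (\<psi>' h) = 0"
proof -
  obtain \<psi>' where d: "(phistar has_derivative \<psi>') (at \<theta>)" and \<psi>': "\<And>h. follower_mixed h + follower_hess (\<psi>' h) = 0"
    using phistar_has_derivative by blast
  have "((\<lambda>t. (t, phistar t)) has_derivative (\<lambda>h. (h, \<psi>' h))) (at \<theta>)"
    by (intro has_derivative_Pair has_derivative_ident d)
  from has_derivative_compose[OF this has_derivative_integral_xy[OF uniformly_differentiable_family_reward_term]]
  have "((\<lambda>t. integral_xy (reward_term (t, phistar t))) has_derivative
      (\<lambda>h. integral_xy (reward_term_grad (\<theta>, phistar \<theta>)) \<bullet> (h, \<psi>' h))) (at \<theta>)"
    using theta_in by simp
  then have "((\<lambda>t. integral_xy (reward_term (t, phistar t)) - \<beta> * integral_xy (kl_term t)) has_derivative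
      (\<lambda>h. integral_xy (reward_term_grad (\<theta>, phistar \<theta>)) \<bullet> (h, \<psi>' h) - \<beta> * (integral_xy (kl_term_grad \<theta>) \<bullet> h)))
      (at \<theta>)"
    by (intro has_derivative_diff has_derivative_mult_right
        has_derivative_integral_xy[OF uniformly_differentiable_family_kl_term theta_in])
  then have "((\<lambda>t. Jobj PX \<mu> pol piref \<beta> r t (phistar t)) has_derivative
      (\<lambda>h. integral_xy (reward_term_grad (\<theta>, phistar \<theta>)) \<bullet> (h, \<psi>' h) - \<beta> * (integral_xy (kl_term_grad \<theta>) \<bullet> h)))
      (at \<theta>)"
    by (rule has_derivative_transform_within_open[OF _ U_open theta_in]) (simp add: Jobj_eq)
  with \<psi>' that show ?thesis by blast
qed

lemma grad_ln_pol: "t \<in> U \<Longrightarrow> grad (\<lambda>t. ln (pol t x y)) t = (1 / pol t x y) *\<^sub>R pol_grad t x y"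
  by (rule grad_eqI) (auto intro!: derivative_eq_intros simp: pi_pos field_simps)

lemma grad_lBT:
  "grad (lBT Pstar r x y y') \<phi> = (sigmoid (r \<phi> x y - r \<phi> x y') - Pstar x y y') *\<^sub>R (r_grad \<phi> x y - r_grad \<phi> x y')"
  unfolding lBT_eq_softplus[OF Pstar_compl, abs_def]
  by (rule grad_eqI) (auto intro!: derivative_eq_intros simp: algebra_simps)

definition "follower_hess_inv = inv follower_hess"

lemma bounded_linear_follower_hess_inv: "bounded_linear follower_hess_inv"
  unfolding follower_hess_inv_def
  by (rule inj_linear_imp_inv_bounded_linear[OF bounded_linear_follower_hess inj_follower_hess])

lemma follower_hess_inv_follower_hess [simp]: "follower_hess_inv (follower_hess k) = k"
  unfolding follower_hess_inv_def by (rule inv_f_f[OF inj_follower_hess])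

text \<open>Both the influence term and the implicit part of the hypergradient see the reward gradient
  only through this functional.\<close>

definition "gbar_hess_inv v = gbar PX \<mu> pol r phistar \<theta> \<bullet> follower_hess_inv v"

lemma bounded_linear_gbar_hess_inv: "bounded_linear gbar_hess_inv"
  unfolding gbar_hess_inv_def[abs_def]
  by (rule bounded_linear_compose[OF bounded_linear_inner_right bounded_linear_follower_hess_inv])

definition "bt_residual = (\<lambda>((x, y), y'). sigmoid (r (phistar \<theta>) x y - r (phistar \<theta>) x y') - Pstar x y y')"
definition "r_grad_diff = (\<lambda>((x, y), y'). r_grad (phistar \<theta>) x y - r_grad (phistar \<theta>) x y')"

lemma gbar_inner_infl:
  "gbar PX \<mu> pol r phistar \<theta> \<bullet> infl PX \<mu> pol piref Pstar r \<Omega> phistar \<theta> x y y' =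
    - (bt_residual ((x, y), y') * gbar_hess_inv (r_grad_diff ((x, y), y')))"
  using linear_scale[OF bounded_linear.linear[OF bounded_linear_follower_hess_inv]]
  by (simp add: infl_def hess_LBT grad_lBT follower_hess_inv_def[symmetric] gbar_hess_inv_def
      bt_residual_def r_grad_diff_def)

lemma rtilde_eq:
  "rtilde PX \<mu> pol piref Pstar r \<Omega> phistar \<theta> x y =
    r (phistar \<theta>) x y - (\<integral>y'. piref x y' * (bt_residual ((x, y), y') * gbar_hess_inv (r_grad_diff ((x, y), y'))) \<partial>\<mu>)"
  by (simp add: rtilde_def gbar_inner_infl)

lemma bounded_borel_bt_residual: "bounded_borel bt_residual"
proof -
  have "bounded_borel (\<lambda>((x, y), y'). sigmoid (r (phistar \<theta>) x y - r (phistar \<theta>) x y'))"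
    unfolding case_prod_beta' by (intro bounded_borel_continuous compact_UNIV_xyy continuous_intros)
  from bounded_borel_diff[OF this bounded_borel_pref] show ?thesis
    by (simp add: bt_residual_def pref_def case_prod_beta')
qed

lemma bounded_borel_r_grad_diff: "bounded_borel r_grad_diff"
  unfolding r_grad_diff_def case_prod_beta'
  by (intro bounded_borel_continuous compact_UNIV_xyy continuous_intros)

lemma bounded_borel_pol_grad_theta: "bounded_borel (\<lambda>(x, y). pol_grad \<theta> x y \<bullet> h)"
  unfolding case_prod_beta' using theta_in
  by (intro bounded_borel_continuous XY_compact continuous_intros) auto

lemma bounded_borel_piref: "bounded_borel (\<lambda>((x, _::'y), y'). piref x y')"
  unfolding case_prod_beta' by (intro bounded_borel_continuous compact_UNIV_xyy continuous_intros)

definition "score_weight h = (\<lambda>((x, y), y'). piref x y' * bt_residual ((x, y), y') * (pol_grad \<theta> x y \<bullet> h))"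

lemma bounded_borel_score_weight: "bounded_borel (score_weight h)"
proof -
  from bounded_borel_mult[OF bounded_borel_mult[OF bounded_borel_piref bounded_borel_bt_residual]
      bounded_borel_compose[OF bounded_borel_pol_grad_theta, of fst]] show ?thesis
    by (simp add: score_weight_def case_prod_beta' borel_measurable_continuous_onI continuous_on_fst)
qed

lemma follower_mixed_eq: "follower_mixed h = integral_xyy (\<lambda>z. score_weight h z *\<^sub>R r_grad_diff z)"
proof (rule euclidean_eqI)
  fix e :: 'p assume e: "e \<in> Basis"
  have bb: "bounded_borel (\<lambda>z. score_weight h z *\<^sub>R r_grad_diff z)"
    by (intro bounded_borel_scaleR bounded_borel_score_weight bounded_borel_r_grad_diff)
  have "follower_mixed h \<bullet> e = follower_jacobian_row e (\<theta>, phistar \<theta>) \<bullet> (h, 0)"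
    using e by (simp add: follower_mixed_def follower_jacobian_apply inner_sum_left inner_Basis
        if_distrib cong: if_cong)
  also have "\<dots> = fst (integral_xyy (pair_loss_grad2 e (\<theta>, phistar \<theta>))) \<bullet> h"
    by (cases "integral_xyy (pair_loss_grad2 e (\<theta>, phistar \<theta>))") (simp add: follower_jacobian_row_def)
  also have "\<dots> = integral_xyy (\<lambda>z. fst (pair_loss_grad2 e (\<theta>, phistar \<theta>) z) \<bullet> h)"
    using theta_in uniformly_differentiable_familyD(3)[OF uniformly_differentiable_family_pair_loss_grad]
    by (intro integral_xyy_bounded_linear[symmetric] bounded_linear_inner_left_comp bounded_linear_fst) auto
  also have "\<dots> = integral_xyy (\<lambda>z. (score_weight h z *\<^sub>R r_grad_diff z) \<bullet> e)"
    by (rule arg_cong[where f=integral_xyy], rule ext)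
      (auto simp: pair_loss_grad2_def softplus_term_grad2_def margin_term_grad2_def pref_def score_weight_def
        bt_residual_def r_grad_diff_def algebra_simps split: prod.split)
  also have "\<dots> = integral_xyy (\<lambda>z. score_weight h z *\<^sub>R r_grad_diff z) \<bullet> e"
    by (rule integral_xyy_bounded_linear[OF bb bounded_linear_inner_left])
  finally show "follower_mixed h \<bullet> e = integral_xyy (\<lambda>z. score_weight h z *\<^sub>R r_grad_diff z) \<bullet> e" .
qed

lemma reward_grad_split:
  "integral_xy (reward_term_grad (\<theta>, phistar \<theta>)) \<bullet> (h, k) =
    integral_xy (\<lambda>(x, y). r (phistar \<theta>) x y * (pol_grad \<theta> x y \<bullet> h)) + gbar PX \<mu> pol r phistar \<theta> \<bullet> k"
proof -
  have bb: "bounded_borel (reward_term_grad (\<theta>, phistar \<theta>))"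
    using theta_in uniformly_differentiable_familyD(3)[OF uniformly_differentiable_family_reward_term] by simp
  have "fst (integral_xy (reward_term_grad (\<theta>, phistar \<theta>))) \<bullet> h =
      integral_xy (\<lambda>z. fst (reward_term_grad (\<theta>, phistar \<theta>) z) \<bullet> h)"
    by (rule integral_xy_bounded_linear[OF bb, symmetric]) (intro bounded_linear_inner_left_comp bounded_linear_fst)
  moreover have "snd (integral_xy (reward_term_grad (\<theta>, phistar \<theta>))) =
      integral_xy (\<lambda>z. snd (reward_term_grad (\<theta>, phistar \<theta>) z))"
    by (rule integral_xy_bounded_linear[OF bb bounded_linear_snd, symmetric])
  ultimately show ?thesis
    by (cases "integral_xy (reward_term_grad (\<theta>, phistar \<theta>))")
      (simp add: reward_term_grad_def case_prod_beta' gbar_def integral_xy_def r_grad_def)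
qed

text \<open>The implicit part of the hypergradient, \<open>\<langle>g_r, \<psi>' h\<rangle> = -\<langle>g_r, H\<^sup>-\<^sup>1 (\<partial>\<^sub>\<theta>\<nabla>\<^sub>\<phi>L) h\<rangle>\<close>, is
  an integral against the score \<open>\<nabla>\<^sub>\<theta>\<pi>\<^sub>\<theta> \<bullet> h\<close>; its integrand is the influence correction of
  the effective reward.\<close>

lemma leader_derivative_eq:
  assumes "follower_mixed h + follower_hess k = 0"
  shows "integral_xy (reward_term_grad (\<theta>, phistar \<theta>)) \<bullet> (h, k) =
    (\<integral>x. (\<integral>y. (pol \<theta> x y * rtilde PX \<mu> pol piref Pstar r \<Omega> phistar \<theta> x y) *\<^sub>R
      grad (\<lambda>t. ln (pol t x y)) \<theta> \<partial>\<mu>) \<partial>PX) \<bullet> h"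
proof -
  define a where "a = (\<lambda>((x, y), y'). piref x y' * (bt_residual ((x, y), y') * gbar_hess_inv (r_grad_diff ((x, y), y'))))"
  define c where "c z = (\<integral>y'. a (z, y') \<partial>\<mu>)" for z
  define p where "p z = pol_grad \<theta> (fst z) (snd z)" for z
  define rr where "rr z = r (phistar \<theta>) (fst z) (snd z)" for z
  have bb_a: "bounded_borel a"
    unfolding a_def using bounded_borel_mult[OF bounded_borel_piref bounded_borel_mult[OF bounded_borel_bt_residual
          bounded_borel_bounded_linear[OF bounded_linear_gbar_hess_inv bounded_borel_r_grad_diff]]]
    by (simp add: case_prod_beta')
  have bb_c: "bounded_borel c"
    unfolding c_def[abs_def] by (rule bounded_borel_integral_slice[OF bb_a finite_measure_mu mu_sets])
  have bb_rr: "bounded_borel rr"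
    unfolding rr_def[abs_def] by (intro bounded_borel_continuous XY_compact continuous_intros)
  have bb_p: "bounded_borel p"
    unfolding p_def[abs_def] using theta_in by (intro bounded_borel_continuous XY_compact continuous_intros) auto
  have bb_ph: "bounded_borel (\<lambda>z. p z \<bullet> h)"
    by (rule bounded_borel_bounded_linear[OF bounded_linear_inner_left bb_p])
  have "follower_hess k = - follower_mixed h" using assms by (simp add: eq_neg_iff_add_eq_0 add.commute)
  then have "gbar PX \<mu> pol r phistar \<theta> \<bullet> k = gbar_hess_inv (- follower_mixed h)"
    by (metis gbar_hess_inv_def follower_hess_inv_follower_hess)
  also have "\<dots> = - gbar_hess_inv (follower_mixed h)"
    by (rule linear_neg[OF bounded_linear.linear[OF bounded_linear_gbar_hess_inv]])
  also have "gbar_hess_inv (follower_mixed h) = integral_xyy (\<lambda>z. score_weight h z * gbar_hess_inv (r_grad_diff z))"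
    unfolding follower_mixed_eq
    using integral_xyy_bounded_linear[OF bounded_borel_scaleR[OF bounded_borel_score_weight bounded_borel_r_grad_diff]
        bounded_linear_gbar_hess_inv] linear_scale[OF bounded_linear.linear[OF bounded_linear_gbar_hess_inv]]
    by simp
  also have "\<dots> = integral_xy (\<lambda>z. c z * (p z \<bullet> h))"
  proof -
    have "(\<integral>y'. score_weight h ((x, y), y') * gbar_hess_inv (r_grad_diff ((x, y), y')) \<partial>\<mu>) = c (x, y) * (p (x, y) \<bullet> h)"
      for x y
      using integral_mult_left_zero[of \<mu> "\<lambda>y'. a ((x, y), y')" "p (x, y) \<bullet> h"]
      by (simp add: c_def a_def p_def score_weight_def mult_ac)
    then show ?thesis by (simp add: integral_xyy_def integral_xy_def)
  qed
  finally have "gbar PX \<mu> pol r phistar \<theta> \<bullet> k = integral_xy (\<lambda>z. - (c z * (p z \<bullet> h)))"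
    by (simp add: integral_xy_def)
  moreover have "integral_xy (\<lambda>(x, y). r (phistar \<theta>) x y * (pol_grad \<theta> x y \<bullet> h)) = integral_xy (\<lambda>z. rr z * (p z \<bullet> h))"
    by (simp add: rr_def p_def case_prod_beta')
  ultimately have "integral_xy (reward_term_grad (\<theta>, phistar \<theta>)) \<bullet> (h, k) =
      integral_xy (\<lambda>z. rr z * (p z \<bullet> h) + - (c z * (p z \<bullet> h)))"
    unfolding reward_grad_split integral_xy_add[OF bounded_borel_mult[OF bb_rr bb_ph]
        bounded_borel_uminus[OF bounded_borel_mult[OF bb_c bb_ph]]]
    by simp
  also have "\<dots> = integral_xy (\<lambda>z. ((rr z - c z) *\<^sub>R p z) \<bullet> h)"
    by (simp add: algebra_simps)
  also have "\<dots> = integral_xy (\<lambda>z. (rr z - c z) *\<^sub>R p z) \<bullet> h"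
    by (intro integral_xy_bounded_linear bounded_linear_inner_left bounded_borel_scaleR bounded_borel_diff
        bb_rr bb_c bb_p)
  also have "\<dots> = (\<integral>x. (\<integral>y. (pol \<theta> x y * rtilde PX \<mu> pol piref Pstar r \<Omega> phistar \<theta> x y) *\<^sub>R
      grad (\<lambda>t. ln (pol t x y)) \<theta> \<partial>\<mu>) \<partial>PX) \<bullet> h"
    using theta_in by (simp add: integral_xy_def rtilde_eq grad_ln_pol rr_def c_def a_def p_def)
  finally show ?thesis .
qed

theorem leader_hypergradient:
  "\<exists>gKL. ((\<lambda>t. \<integral>x. KL \<mu> pol piref t x \<partial>PX) has_derivative (\<lambda>h. gKL \<bullet> h)) (at \<theta>) \<and>
     ((\<lambda>t. Jobj PX \<mu> pol piref \<beta> r t (phistar t)) has_derivative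
        (\<lambda>h. ((\<integral>x. (\<integral>y. (pol \<theta> x y * rtilde PX \<mu> pol piref Pstar r \<Omega> phistar \<theta> x y)
                      *\<^sub>R grad (\<lambda>t. ln (pol t x y)) \<theta> \<partial>\<mu>) \<partial>PX) - \<beta> *\<^sub>R gKL) \<bullet> h)) (at \<theta>)"
proof (intro exI conjI)
  show "((\<lambda>t. \<integral>x. KL \<mu> pol piref t x \<partial>PX) has_derivative (\<lambda>h. integral_xy (kl_term_grad \<theta>) \<bullet> h)) (at \<theta>)"
    unfolding KL_integral_eq by (rule has_derivative_integral_xy[OF uniformly_differentiable_family_kl_term theta_in])
  obtain \<psi>' where d: "((\<lambda>t. Jobj PX \<mu> pol piref \<beta> r t (phistar t)) has_derivative
       (\<lambda>h. integral_xy (reward_term_grad (\<theta>, phistar \<theta>)) \<bullet> (h, \<psi>' h) - \<beta> * (integral_xy (kl_term_grad \<theta>) \<bullet> h)))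
       (at \<theta>)" and \<psi>': "\<And>h. follower_mixed h + follower_hess (\<psi>' h) = 0"
    using has_derivative_leader_objective[where \<beta>=\<beta>] by blast
  show "((\<lambda>t. Jobj PX \<mu> pol piref \<beta> r t (phistar t)) has_derivative
      (\<lambda>h. ((\<integral>x. (\<integral>y. (pol \<theta> x y * rtilde PX \<mu> pol piref Pstar r \<Omega> phistar \<theta> x y)
                *\<^sub>R grad (\<lambda>t. ln (pol t x y)) \<theta> \<partial>\<mu>) \<partial>PX) - \<beta> *\<^sub>R integral_xy (kl_term_grad \<theta>)) \<bullet> h)) (at \<theta>)"
    using d by (rule has_derivative_eq_rhs)
      (simp add: fun_eq_iff leader_derivative_eq[OF \<psi>'] inner_diff_left)
qed

end

theorem corollary2:
  fixes PX :: "'x::{metric_space, second_countable_topology} measure"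
    and \<mu> :: "'y::{metric_space, second_countable_topology} measure"
    and \<Theta> :: "'t::euclidean_space set"
    and pol :: "'t \<Rightarrow> 'x \<Rightarrow> 'y \<Rightarrow> real"
    and piref :: "'x \<Rightarrow> 'y \<Rightarrow> real"
    and r :: "'p::euclidean_space \<Rightarrow> 'x \<Rightarrow> 'y \<Rightarrow> real"
    and \<Omega> :: "'p \<Rightarrow> real"
    and Pstar :: "'x \<Rightarrow> 'y \<Rightarrow> 'y \<Rightarrow> real"
    and phistar :: "'t \<Rightarrow> 'p"
    and \<beta> :: real
    and \<theta> :: 't
  assumes XY_compact: "compact (UNIV :: ('x \<times> 'y) set)"
    and PX_prob: "prob_space PX" and PX_sets: "sets PX = sets borel"
    and mu_sets: "sets \<mu> = sets borel"
    and Theta_compact: "compact \<Theta>"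
    and pi_pos: "\<And>t x y. pol t x y > 0"
    and pi_density: "\<And>t x. t \<in> \<Theta> \<Longrightarrow> integrable \<mu> (pol t x) \<and> (\<integral>y. pol t x y \<partial>\<mu>) = 1"
    and pi_C2: "C2_param (interior \<Theta>) (\<lambda>t (x, y). pol t x y)"
    and piref_pos: "\<And>x y. piref x y > 0"
    and piref_cont: "continuous_on UNIV (\<lambda>(x, y). piref x y)"
    and piref_density: "\<And>x. integrable \<mu> (piref x) \<and> (\<integral>y. piref x y \<partial>\<mu>) = 1"
    and beta_pos: "\<beta> > 0"
    and r_C2: "C2_param UNIV (\<lambda>\<phi> (x, y). r \<phi> x y)"
    and Omega_C2: "C2_param UNIV (\<lambda>\<phi> (_::real). \<Omega> \<phi>)"
    and Pstar_range: "\<And>x y y'. 0 \<le> Pstar x y y' \<and> Pstar x y y' \<le> 1"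
    and Pstar_compl: "\<And>x y y'. Pstar x y' y = 1 - Pstar x y y'"
    and Pstar_meas: "(\<lambda>(x, y, y'). Pstar x y y') \<in> borel_measurable borel"
    and LBT_sconv: "\<And>t. t \<in> \<Theta> \<Longrightarrow> strongly_convex (LBT PX \<mu> pol piref Pstar r \<Omega> t)"
    and phistar_min: "\<And>t \<phi>. t \<in> \<Theta> \<Longrightarrow>
          LBT PX \<mu> pol piref Pstar r \<Omega> t (phistar t) \<le> LBT PX \<mu> pol piref Pstar r \<Omega> t \<phi>"
    and theta_int: "\<theta> \<in> interior \<Theta>"
  shows "\<exists>gKL. ((\<lambda>t. \<integral>x. KL \<mu> pol piref t x \<partial>PX) has_derivative (\<lambda>h. gKL \<bullet> h)) (at \<theta>) \<and>
     ((\<lambda>t. Jobj PX \<mu> pol piref \<beta> r t (phistar t)) has_derivative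
        (\<lambda>h. ((\<integral>x. (\<integral>y. (pol \<theta> x y * rtilde PX \<mu> pol piref Pstar r \<Omega> phistar \<theta> x y)
                      *\<^sub>R grad (\<lambda>t. ln (pol t x y)) \<theta> \<partial>\<mu>) \<partial>PX) - \<beta> *\<^sub>R gKL) \<bullet> h)) (at \<theta>)"
proof -
  interpret bt_bilevel PX \<mu> "interior \<Theta>" pol piref r \<Omega> Pstar phistar \<theta>
  proof (rule bt_bilevel.intro)
    show "\<And>t. t \<in> interior \<Theta> \<Longrightarrow> strongly_convex (LBT PX \<mu> pol piref Pstar r \<Omega> t)"
      using LBT_sconv interior_subset by blast
    show "\<And>t \<phi>. t \<in> interior \<Theta> \<Longrightarrow>
        LBT PX \<mu> pol piref Pstar r \<Omega> t (phistar t) \<le> LBT PX \<mu> pol piref Pstar r \<Omega> t \<phi>"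
      using phistar_min interior_subset by blast
  qed (rule assms open_interior)+
  show ?thesis by (rule leader_hypergradient)
qed

end
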